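(* Let $0<q<1$, $t=q^2$, $n\ge1$, and let $z,\alpha>0$ be such that all the $q$-Pochhammer symbols below are non-vanishing with convergent infinite products. For real $u$ and a partition $\lambda$ with at most $n$ parts define (with $k=2$) $$E_P(u;\lambda):=t^{\sum_{i=1}^n(i-1)\lambda_i}\prod_{1\le i<j\le n}(q^{\lambda_i-\lambda_j}t^{j-i};q)_k\prod_{i=1}^n\frac{(ut^{1-i};q)_{\lambda_i}}{(t;q)_{\lambda_i+k(n-i)}},$$ $$E_Q(u;\lambda):=t^{\sum_{i=1}^n(i-1)\lambda_i}\prod_{1\le i<j\le n}(q^{\lambda_i-\lambda_j+1}t^{j-i-1};q)_k\prod_{i=1}^n\frac{(ut^{1-i};q)_{\lambda_i}}{(q;q)_{\lambda_i+k(n-i)}},$$ and for partitions $\kappa\subseteq\mu$ let $$\psi_{\mu/\kappa}:=\prod_{1\le i\le j\le\ell(\kappa)}\frac{f(q^{\kappa_i-\kappa_j}t^{j-i})f(q^{\mu_i-\mu_{j+1}}t^{j-i})}{f(q^{\mu_i-\kappa_j}t^{j-i})f(q^{\kappa_i-\mu_{j+1}}t^{j-i})},\qquad f(x):=\frac{(tx;q)_\infty}{(qx;q)_\infty}.$$ For parameters $z_1,z_2,w,u$ define $$\mathrm{Pr_e}(\mu,\kappa):=\frac{(z_1\alpha;q)_\infty}{(t^nz_1\alpha;q)_\infty}\prod_{p=0}^\infty\frac{(z_1z_2t^p;q)_\infty(wz_1z_2t^{p+n};q)_\infty}{(z_1z_2t^{p+n};q)_\infty(wz_1z_2t^p;q)_\infty}E_Q(t^n;\mu)E_P(w;\kappa)\psi_{\mu/\kappa}z_1^{|\mu|}z_2^{|\kappa|}\alpha^{|\mu|-|\kappa|}$$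 for $\mu_1\ge\kappa_1\ge\mu_2\ge\kappa_2\ge\dots\ge\mu_n\ge\kappa_n\ge0$, and $$\mathrm{Pr_o}(\mu,\kappa):=\frac{(z_1\alpha;q)_\infty}{(uz_1\alpha;q)_\infty}\prod_{p=0}^\infty\frac{(z_1z_2t^p;q)_\infty(uz_1z_2t^{p+n-1};q)_\infty}{(uz_1z_2t^p;q)_\infty(z_1z_2t^{p+n-1};q)_\infty}E_Q(u;\mu)E_P(t^{n-1};\kappa)\psi_{\mu/\kappa}z_1^{|\mu|}z_2^{|\kappa|}\alpha^{|\mu|-|\kappa|}$$ for $\mu_1\ge\kappa_1\ge\dots\ge\mu_{n-1}\ge\kappa_{n-1}\ge\mu_n\ge0$ (with $\kappa_n=0$). For $N\ge1$ and integers $h_1>\dots>h_N\ge0$ let $$P_N(h):=c_N\,z^{\sum_{j=1}^Nh_j}\alpha^{\sum_{j=1}^N(-1)^{j-1}h_j}\prod_{1\le i<j\le N}(q^{h_j}-q^{h_i}),$$ $$c_N:=z^{-\sum_{j=1}^N(N-j)}\alpha^{-[N/2]}\frac{q^{-\sum_{j=1}^N(j-1)(N-j)}}{\prod_{l=1}^{N-1}(q;q)_l}\prod_{i=1}^N(1-\alpha zq^{i-1})\prod_{1\le i<j\le N}(1-z^2q^{i+j-2}).$$ Then: (i) with $w=q^{-1}t^n$, $z_1=z$, $z_2=qz$, and $h_{2j-1}:=\mu_j+2n-(2j-1)$, $h_{2j}:=\kappa_j+2n-2j$ ($1\le j\le n$), one has $\mathrm{Pr_e}(\mu,\kappa)=P_{2n}(h)$;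 (ii) with $u=qt^{n-1}$, $z_1=z$, $z_2=qz$, and $h_{2j-1}:=\mu_j+(2n-1)-(2j-1)$ ($1\le j\le n$), $h_{2j}:=\kappa_j+(2n-1)-2j$ ($1\le j\le n-1$), one has $\mathrm{Pr_o}(\mu,\kappa)=P_{2n-1}(h)$.
   Context: $(x;q)_\infty:=\prod_{i\ge0}(1-xq^i)$, $(x;q)_m:=\prod_{i=0}^{m-1}(1-xq^i)$, $(q;q)_l=(1-q)\cdots(1-q^l)$; $|\lambda|$ is the sum of parts and $\ell(\lambda)$ the number of non-zero parts of a partition; $[N/2]$ is the integer part. $E_P(u;\lambda)$ and $E_Q(u;\lambda)$ are the values, under the specialization of power sums $p_r\mapsto(1-u^r)/(1-t^r)$, of the Macdonald polynomials $P_\lambda(\cdot;q,t)$ and $Q_\lambda(\cdot;q,t)$ for $t=q^k$. $P_N(h)$ is the probability that a symmetric $N\times N$ array of geometric variables with parameters $z^2q^{i+j-2}$ off the diagonal and $\alpha zq^{i-1}$ on the diagonal has RSK shape $\mu$ with $h_j=\mu_j+N-j$. *)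

theory Defs
  imports "HOL-Analysis.Analysis"
begin

definition qpoch :: "real \<Rightarrow> real \<Rightarrow> nat \<Rightarrow> real" where
  "qpoch x q m = (\<Prod>i<m. 1 - x * q ^ i)"

definition qpinf :: "real \<Rightarrow> real \<Rightarrow> real" where
  "qpinf x q = (\<Prod>i. 1 - x * q ^ i)"

text \<open>Partitions are functions nat => nat indexed from 1 (index 0 is ignored).\<close>
definition plen :: "(nat \<Rightarrow> nat) \<Rightarrow> nat" where
  "plen lam = card {i. 1 \<le> i \<and> lam i \<noteq> 0}"

definition psize :: "(nat \<Rightarrow> nat) \<Rightarrow> nat" where
  "psize lam = (\<Sum>i | 1 \<le> i \<and> lam i \<noteq> 0. lam i)"

definition EP :: "real \<Rightarrow> real \<Rightarrow> nat \<Rightarrow> nat \<Rightarrow> real \<Rightarrow> (nat \<Rightarrow> nat) \<Rightarrow> real" where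
  "EP q t k n u lam =
     t ^ (\<Sum>i=1..n. (i - 1) * lam i)
     * (\<Prod>i\<in>{1..n}. \<Prod>j\<in>{i<..n}. qpoch (q powi (int (lam i) - int (lam j)) * t ^ (j - i)) q k)
     * (\<Prod>i=1..n. qpoch (u * t powi (1 - int i)) q (lam i) / qpoch t q (lam i + k * (n - i)))"

definition EQ :: "real \<Rightarrow> real \<Rightarrow> nat \<Rightarrow> nat \<Rightarrow> real \<Rightarrow> (nat \<Rightarrow> nat) \<Rightarrow> real" where
  "EQ q t k n u lam =
     t ^ (\<Sum>i=1..n. (i - 1) * lam i)
     * (\<Prod>i\<in>{1..n}. \<Prod>j\<in>{i<..n}. qpoch (q powi (int (lam i) - int (lam j) + 1) * t ^ (j - i - 1)) q k)
     * (\<Prod>i=1..n. qpoch (u * t powi (1 - int i)) q (lam i) / qpoch q q (lam i + k * (n - i)))"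

definition qf :: "real \<Rightarrow> real \<Rightarrow> real \<Rightarrow> real" where
  "qf q t x = qpinf (t * x) q / qpinf (q * x) q"

definition psi :: "real \<Rightarrow> real \<Rightarrow> (nat \<Rightarrow> nat) \<Rightarrow> (nat \<Rightarrow> nat) \<Rightarrow> real" where
  "psi q t mu ka =
     (\<Prod>i\<in>{1..plen ka}. \<Prod>j\<in>{i..plen ka}.
        qf q t (q powi (int (ka i) - int (ka j)) * t ^ (j - i))
        * qf q t (q powi (int (mu i) - int (mu (Suc j))) * t ^ (j - i))
        / (qf q t (q powi (int (mu i) - int (ka j)) * t ^ (j - i))
           * qf q t (q powi (int (ka i) - int (mu (Suc j))) * t ^ (j - i))))"

definition Pr_e :: "real \<Rightarrow> real \<Rightarrow> nat \<Rightarrow> nat \<Rightarrow> real \<Rightarrow> real \<Rightarrow> real \<Rightarrow> real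
                     \<Rightarrow> (nat \<Rightarrow> nat) \<Rightarrow> (nat \<Rightarrow> nat) \<Rightarrow> real" where
  "Pr_e q t k n z1 z2 w \<alpha> mu ka =
     qpinf (z1 * \<alpha>) q / qpinf (t ^ n * z1 * \<alpha>) q
     * (\<Prod>p. qpinf (z1 * z2 * t ^ p) q * qpinf (w * z1 * z2 * t ^ (p + n)) q
             / (qpinf (z1 * z2 * t ^ (p + n)) q * qpinf (w * z1 * z2 * t ^ p) q))
     * EQ q t k n (t ^ n) mu * EP q t k n w ka * psi q t mu ka
     * z1 ^ psize mu * z2 ^ psize ka * \<alpha> powi (int (psize mu) - int (psize ka))"

definition Pr_o :: "real \<Rightarrow> real \<Rightarrow> nat \<Rightarrow> nat \<Rightarrow> real \<Rightarrow> real \<Rightarrow> real \<Rightarrow> real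
                     \<Rightarrow> (nat \<Rightarrow> nat) \<Rightarrow> (nat \<Rightarrow> nat) \<Rightarrow> real" where
  "Pr_o q t k n z1 z2 u \<alpha> mu ka =
     qpinf (z1 * \<alpha>) q / qpinf (u * z1 * \<alpha>) q
     * (\<Prod>p. qpinf (z1 * z2 * t ^ p) q * qpinf (u * z1 * z2 * t ^ (p + n - 1)) q
             / (qpinf (u * z1 * z2 * t ^ p) q * qpinf (z1 * z2 * t ^ (p + n - 1)) q))
     * EQ q t k n u mu * EP q t k n (t ^ (n - 1)) ka * psi q t mu ka
     * z1 ^ psize mu * z2 ^ psize ka * \<alpha> powi (int (psize mu) - int (psize ka))"

definition cN :: "real \<Rightarrow> real \<Rightarrow> real \<Rightarrow> nat \<Rightarrow> real" where
  "cN q z \<alpha> N =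
     z powi (- (\<Sum>j=1..N. int (N - j))) * \<alpha> powi (- int (N div 2))
     * q powi (- (\<Sum>j=1..N. int ((j - 1) * (N - j)))) / (\<Prod>l=1..N-1. qpoch q q l)
     * (\<Prod>i=1..N. 1 - \<alpha> * z * q ^ (i - 1))
     * (\<Prod>i\<in>{1..N}. \<Prod>j\<in>{i<..N}. 1 - z ^ 2 * q ^ (i + j - 2))"

definition PN :: "real \<Rightarrow> real \<Rightarrow> real \<Rightarrow> nat \<Rightarrow> (nat \<Rightarrow> int) \<Rightarrow> real" where
  "PN q z \<alpha> N h =
     cN q z \<alpha> N * z powi (\<Sum>j=1..N. h j) * \<alpha> powi (\<Sum>j=1..N. (-1) ^ (j - 1) * h j)
     * (\<Prod>i\<in>{1..N}. \<Prod>j\<in>{i<..N}. q powi h j - q powi h i)"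

end

(*
  At t = q^2 the function f(x) = (t x; q)_inf / (q x; q)_inf collapses to 1 / (1 - q x), so that
  E_P, E_Q and psi become finite products of factors 1 - q^k. Writing a_i = mu_i - 2 i and
  b_i = ka_i - 2 i - 1, which are h_(2i-1) and h_(2i) up to a common shift, these factors cancel
  down to the Vandermonde product prod_(i<j) (1 - q^(h_i - h_j)) divided by prod_l (q; q)_l.
  The product over p telescopes to prod_(1<=i<j<=N) (1 - z^2 q^(i+j-2)), and the prefactor
  (z alpha; q)_inf / (t^n z alpha; q)_inf is (z alpha; q)_N. Both sides then agree up to the
  exponents of z, alpha and q, which are matched by splitting the sums over j into odd and even j.
*)
theory Submission
  imports Defs
begin

section \<open>q-Pochhammer symbols\<close>

lemma convergent_prod_one_minus_geometric:
  fixes q x :: real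
  assumes "\<bar>q\<bar> < 1"
  shows "convergent_prod (\<lambda>i. 1 - x * q ^ i)"
proof -
  have "summable (\<lambda>i. \<bar>x\<bar> * \<bar>q\<bar> ^ i)"
    using assms by (intro summable_mult summable_geometric) auto
  then have "summable (\<lambda>i. norm ((1 - x * q ^ i) - 1))"
    by (simp add: abs_mult power_abs)
  then show ?thesis
    by (intro abs_convergent_prod_imp_convergent_prod summable_imp_abs_convergent_prod)
qed

lemma qpinf_split:
  fixes q x :: real
  assumes "\<bar>q\<bar> < 1"
  shows "qpinf x q = qpoch x q m * qpinf (x * q ^ m) q"
proof -
  have "(\<lambda>i. 1 - x * q ^ i) has_prod (qpoch x q m * (\<Prod>i. 1 - x * q ^ (i + m)))"
    unfolding qpoch_def
    by (rule has_prod_ignore_initial_segment'[OF convergent_prod_one_minus_geometric[OF assms]])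
  then show ?thesis
    unfolding qpinf_def by (simp add: has_prod_iff power_add mult_ac)
qed

lemma qpinf_shift_nonzero:
  fixes q x :: real
  assumes "\<bar>q\<bar> < 1" "qpinf x q \<noteq> 0"
  shows "qpinf (x * q ^ m) q \<noteq> 0"
  using assms qpinf_split[of q x m] by auto

lemma qpinf_nonzero_factor:
  fixes q x :: real
  assumes "\<bar>q\<bar> < 1" "qpinf x q \<noteq> 0"
  shows "1 - x * q ^ i \<noteq> 0"
  using assms qpinf_split[of q x "Suc i"] by (auto simp: qpoch_def)

lemma qpinf_divide_shift:
  fixes q x :: real
  assumes "\<bar>q\<bar> < 1" "qpinf x q \<noteq> 0"
  shows "qpinf x q / qpinf (x * q ^ m) q = qpoch x q m"
  using assms qpinf_split[of q x m] by auto

lemma qpinf_nonzero: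
  fixes q x :: real
  assumes "0 < q" "q < 1" "0 \<le> x" "x < 1"
  shows "qpinf x q \<noteq> 0"
  unfolding qpinf_def
proof (intro prodinf_nonzero convergent_prod_one_minus_geometric)
  fix i
  have "x * q ^ i \<le> x"
    using assms by (simp add: mult_left_le power_le_one)
  then show "1 - x * q ^ i \<noteq> 0"
    using assms by simp
qed (use assms in simp)

lemma qpoch_add: "qpoch x q (a + b) = qpoch x q a * qpoch (x * q ^ a) q b"
  by (induction b) (simp_all add: qpoch_def power_add mult_ac)

lemma qpoch_pos:
  assumes "0 < q" "q < 1" "0 \<le> x" "x \<le> 1"
  shows "qpoch (x * q) q k > 0"
  unfolding qpoch_def
proof (rule prod_pos)
  fix i
  have "x * q ^ Suc i \<le> q ^ Suc i"
    using assms by (simp add: mult_left_le_one_le)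
  also have "\<dots> < 1"
    using assms by (intro power_Suc_less_one) auto
  finally show "0 < 1 - x * q * q ^ i"
    by (simp add: mult.assoc)
qed

lemma qpoch_qq_nonzero:
  assumes "0 < q" "q < 1"
  shows "qpoch q q k \<noteq> 0"
  using qpoch_pos[OF assms, of 1 k] by simp

lemma qpoch_qpower:
  assumes "0 < q" "q < 1"
  shows "qpoch (q ^ Suc a) q m = qpoch q q (a + m) / qpoch q q a"
  using qpoch_add[of q q a m] qpoch_qq_nonzero[OF assms, of a] by simp

lemma qpoch_qsquare:
  assumes "0 < q" "q < 1"
  shows "qpoch (q\<^sup>2) q k = qpoch q q (Suc k) / (1 - q)"
  using qpoch_add[of q q 1 k] assms by (simp add: qpoch_def power2_eq_square)

lemma qf_qsquare_qpower:
  fixes q :: real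
  assumes "0 < q" "q < 1"
  shows "qf q (q\<^sup>2) (q ^ e) = 1 / (1 - q ^ Suc e)"
proof -
  have lt1: "q ^ Suc e < 1" "q ^ Suc (Suc e) < 1"
    using assms by (intro power_Suc_less_one; simp)+
  then have nz: "qpinf (q ^ Suc e) q \<noteq> 0" "qpinf (q ^ Suc (Suc e)) q \<noteq> 0"
    using assms by (intro qpinf_nonzero; simp)+
  have "qpinf (q ^ Suc e) q = (1 - q ^ Suc e) * qpinf (q ^ Suc (Suc e)) q"
    using qpinf_split[of q "q ^ Suc e" 1] assms by (simp add: qpoch_def mult.commute)
  then show ?thesis
    using lt1 nz unfolding qf_def by (simp add: power2_eq_square field_simps)
qed

lemma qsquare_power_eq_powi: "((q::real)\<^sup>2) ^ n = q powi (2 * int n)"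
  by (metis of_nat_mult of_nat_numeral power_int_of_nat power_mult)

lemma powi_mult_qsquare_powi:
  fixes q :: real
  assumes "q \<noteq> 0"
  shows "q powi c * (q\<^sup>2) powi (1 - int i) = q powi (c + (2 - 2 * int i))"
proof -
  have "(q\<^sup>2) powi (1 - int i) = q powi (2 * (1 - int i))"
    by (simp only: power_int_mult) simp
  then show ?thesis
    using assms by (simp add: power_int_add)
qed

lemma qpoch_qq_Suc: "qpoch q q (Suc k) = qpoch q q k * (1 - q ^ Suc k)"
  by (simp add: qpoch_def)

lemma powi_of_nat_eq: "c = int e \<Longrightarrow> (q::real) powi c = q ^ e"
  by simp

lemma qpoch_0 [simp]: "qpoch x q 0 = 1"
  by (simp add: qpoch_def)

definition qdiff :: "real \<Rightarrow> int \<Rightarrow> real" where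
  "qdiff q k = 1 - q powi k"

lemma qdiff_nonzero:
  assumes "0 < q" "q < 1" "k > 0"
  shows "qdiff q k \<noteq> 0"
proof -
  have "q powi k = q ^ nat k"
    using assms by (simp add: power_int_def)
  also have "\<dots> < 1"
    using assms by (simp add: power_less_one_iff)
  finally show ?thesis
    by (simp add: qdiff_def)
qed

lemma qdiff_of_nat: "qdiff q (int e) = 1 - q ^ e"
  by (simp add: qdiff_def)

lemma powi_mult_qsquare_power:
  fixes q :: real
  assumes "q \<noteq> 0"
  shows "q powi a * (q\<^sup>2) ^ m = q powi (a + 2 * int m)"
  using assms by (simp add: qsquare_power_eq_powi power_int_add)

lemma qf_qsquare_qdiff:
  assumes q: "0 < q" "q < 1" and "b \<le> a"
  shows "qf q (q\<^sup>2) (q powi (int a - int b) * (q\<^sup>2) ^ d) = 1 / qdiff q (int a - int b + 2 * int d + 1)"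
proof -
  have diff: "int a - int b = int (a - b)"
    using \<open>b \<le> a\<close> by simp
  have "q powi (int a - int b) * (q\<^sup>2) ^ d = q ^ (a - b + 2 * d)"
    unfolding diff power_int_of_nat by (simp add: power_add power_mult)
  then have "qf q (q\<^sup>2) (q powi (int a - int b) * (q\<^sup>2) ^ d) = 1 / qdiff q (int (Suc (a - b + 2 * d)))"
    by (simp only: qf_qsquare_qpower[OF q] qdiff_of_nat)
  also have "int (Suc (a - b + 2 * d)) = int a - int b + 2 * int d + 1"
    using \<open>b \<le> a\<close> by simp
  finally show ?thesis .
qed

lemma prod_atLeastAtMost_nonzero:
  fixes F :: "nat \<Rightarrow> real"
  shows "(\<And>i. 1 \<le> i \<Longrightarrow> i \<le> N \<Longrightarrow> F i \<noteq> 0) \<Longrightarrow> (\<Prod>i=1..N. F i) \<noteq> 0"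
  by (subst prod_zero_iff) auto

lemma qdiff_1 [simp]: "qdiff q 1 = 1 - q"
  by (simp add: qdiff_def)

lemma prod_one_minus_geometric_eq_qpoch: "(\<Prod>i=1..N. 1 - a * z * q ^ (i - 1)) = qpoch (z * a) q N"
  unfolding qpoch_def by (simp add: prod.atLeast1_atMost_eq mult_ac)

section \<open>Products over triangles\<close>

definition tri_prod :: "(nat \<Rightarrow> nat \<Rightarrow> 'a::comm_monoid_mult) \<Rightarrow> nat \<Rightarrow> 'a" where
  "tri_prod F N = (\<Prod>i\<in>{1..N}. \<Prod>j\<in>{i<..N}. F i j)"

definition tri_prod_diag :: "(nat \<Rightarrow> nat \<Rightarrow> 'a::comm_monoid_mult) \<Rightarrow> nat \<Rightarrow> 'a" where
  "tri_prod_diag F N = (\<Prod>i\<in>{1..N}. \<Prod>j\<in>{i..N}. F i j)"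

lemma tri_prod_Suc: "tri_prod F (Suc N) = tri_prod F N * (\<Prod>i\<in>{1..N}. F i (Suc N))"
proof -
  have "(\<Prod>j\<in>{i<..Suc N}. F i j) = (\<Prod>j\<in>{i<..N}. F i j) * F i (Suc N)" if "i \<le> N" for i
  proof -
    have "{i<..Suc N} = insert (Suc N) {i<..N}"
      using that by auto
    then show ?thesis
      by (simp add: mult.commute)
  qed
  then show ?thesis
    unfolding tri_prod_def by (simp add: prod.cl_ivl_Suc prod.distrib)
qed

lemma tri_prod_diag_Suc:
  "tri_prod_diag F (Suc N) = tri_prod_diag F N * (\<Prod>i\<in>{1..Suc N}. F i (Suc N))"
proof -
  have "(\<Prod>j\<in>{i..Suc N}. F i j) = (\<Prod>j\<in>{i..N}. F i j) * F i (Suc N)" if "i \<le> N" for i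
  proof -
    have "{i..Suc N} = insert (Suc N) {i..N}"
      using that by auto
    then show ?thesis
      by (simp add: mult.commute)
  qed
  then show ?thesis
    unfolding tri_prod_diag_def by (simp add: prod.cl_ivl_Suc prod.distrib mult_ac)
qed

lemma tri_prod_mult: "tri_prod (\<lambda>i j. F i j * G i j) N = tri_prod F N * tri_prod G N"
  unfolding tri_prod_def by (simp add: prod.distrib)

lemma tri_prod_diag_mult:
  "tri_prod_diag (\<lambda>i j. F i j * G i j) N = tri_prod_diag F N * tri_prod_diag G N"
  unfolding tri_prod_diag_def by (simp add: prod.distrib)

lemma tri_prod_diag_divide:
  fixes F G :: "nat \<Rightarrow> nat \<Rightarrow> real"
  shows "tri_prod_diag (\<lambda>i j. F i j / G i j) N = tri_prod_diag F N / tri_prod_diag G N"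
  unfolding tri_prod_diag_def by (simp add: prod_dividef)

lemma tri_prod_cong:
  "(\<And>i j. 1 \<le> i \<Longrightarrow> i < j \<Longrightarrow> j \<le> N \<Longrightarrow> F i j = G i j) \<Longrightarrow> tri_prod F N = tri_prod G N"
  unfolding tri_prod_def by (intro prod.cong refl) auto

lemma tri_prod_diag_cong:
  "(\<And>i j. 1 \<le> i \<Longrightarrow> i \<le> j \<Longrightarrow> j \<le> N \<Longrightarrow> F i j = G i j)
    \<Longrightarrow> tri_prod_diag F N = tri_prod_diag G N"
  unfolding tri_prod_diag_def by (intro prod.cong refl) auto

lemma tri_prod_nonzero:
  fixes F :: "nat \<Rightarrow> nat \<Rightarrow> real"
  shows "(\<And>i j. 1 \<le> i \<Longrightarrow> i < j \<Longrightarrow> j \<le> N \<Longrightarrow> F i j \<noteq> 0) \<Longrightarrow> tri_prod F N \<noteq> 0"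
  unfolding tri_prod_def by (auto simp: prod_zero_iff)

lemma tri_prod_diag_eq: "tri_prod_diag F N = tri_prod F N * (\<Prod>i\<in>{1..N}. F i i)"
proof -
  have "(\<Prod>j\<in>{i..N}. F i j) = (\<Prod>j\<in>{i<..N}. F i j) * F i i" if "i \<le> N" for i
  proof -
    have "{i..N} = insert i {i<..N}"
      using that by auto
    then show ?thesis
      by (simp add: mult.commute)
  qed
  then show ?thesis
    unfolding tri_prod_diag_def tri_prod_def by (simp add: prod.distrib)
qed

lemma tri_prod_diag_shift:
  "tri_prod_diag (\<lambda>i j. F i (Suc j)) N = tri_prod F N * (\<Prod>i\<in>{1..N}. F i (Suc N))"
proof -
  have "(\<Prod>j\<in>{i..N}. F i (Suc j)) = (\<Prod>j\<in>{i<..N}. F i j) * F i (Suc N)" if "i \<le> N" for i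
  proof -
    have "(\<Prod>j\<in>{i..N}. F i (Suc j)) = (\<Prod>j\<in>{i<..Suc N}. F i j)"
      by (simp only: prod.shift_bounds_cl_Suc_ivl[symmetric] atLeastSucAtMost_greaterThanAtMost)
    also have "{i<..Suc N} = insert (Suc N) {i<..N}"
      using that by auto
    finally show ?thesis
      by (simp add: mult.commute)
  qed
  then show ?thesis
    unfolding tri_prod_diag_def tri_prod_def by (simp add: prod.distrib)
qed

lemma tri_prod_column_const: "tri_prod (\<lambda>i j. c j) N = (\<Prod>j\<in>{1..N}. c j ^ (j - 1))"
  by (induction N) (simp_all add: tri_prod_Suc prod.cl_ivl_Suc, simp add: tri_prod_def)

lemma prod_interleave:
  fixes n :: nat
  shows "(\<Prod>k\<in>{1..2 * n}. g k) = (\<Prod>i\<in>{1..n}. g (2 * i - 1) * g (2 * i))"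
  by (induction n) (simp_all add: prod.cl_ivl_Suc mult.assoc)

lemma sum_interleave:
  fixes n :: nat
  shows "(\<Sum>k\<in>{1..2 * n}. g k) = (\<Sum>i\<in>{1..n}. g (2 * i - 1) + g (2 * i))"
  by (induction n) (simp_all add: sum.cl_ivl_Suc add.assoc)

lemma tri_prod_interleave_even:
  "tri_prod F (2 * n) =
     tri_prod (\<lambda>i j. F (2 * i - 1) (2 * j - 1)) n * tri_prod (\<lambda>i j. F (2 * i) (2 * j)) n
     * tri_prod_diag (\<lambda>i j. F (2 * i - 1) (2 * j)) n * tri_prod (\<lambda>i j. F (2 * i) (2 * j - 1)) n"
proof (induction n)
  case 0
  then show ?case
    by (simp add: tri_prod_def tri_prod_diag_def)
next
  case (Suc n)
  have two: "2 * Suc n = Suc (Suc (2 * n))"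
    by simp
  have last_column: "(\<Prod>i\<in>{1..Suc (2 * n)}. F i (Suc (Suc (2 * n)))) =
      (\<Prod>i\<in>{1..n}. F (2 * i - 1) (Suc (Suc (2 * n))) * F (2 * i) (Suc (Suc (2 * n))))
      * F (Suc (2 * n)) (Suc (Suc (2 * n)))"
    using prod_interleave[of "\<lambda>i. F i (Suc (Suc (2 * n)))" n] by (simp add: prod.cl_ivl_Suc)
  show ?case
    unfolding two tri_prod_Suc last_column prod_interleave
    unfolding two[symmetric] Suc.IH tri_prod_Suc[of _ n] tri_prod_diag_Suc[of _ n]
    by (simp add: prod.cl_ivl_Suc prod.distrib mult_ac)
qed

lemma tri_prod_interleave_odd:
  "tri_prod F (Suc (2 * n)) =
     tri_prod (\<lambda>i j. F (2 * i - 1) (2 * j - 1)) (Suc n) * tri_prod (\<lambda>i j. F (2 * i) (2 * j)) n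
     * tri_prod_diag (\<lambda>i j. F (2 * i - 1) (2 * j)) n * tri_prod (\<lambda>i j. F (2 * i) (2 * j - 1)) (Suc n)"
  unfolding tri_prod_Suc[of F "2 * n"] tri_prod_interleave_even prod_interleave
    tri_prod_Suc[of _ n]
  by (simp add: prod.distrib mult_ac)

lemma prod_lessThan_double:
  "(\<Prod>r<(K::nat). g (2*r) * g (2*r+1)) = (\<Prod>e<2*K. (g e :: 'a::comm_monoid_mult))"
  by (induction K) (simp_all add: mult_ac)

lemma prod_lessThan_cong_arg:
  "(\<And>e. e < N \<Longrightarrow> a e = b e) \<Longrightarrow> (\<Prod>e<(N::nat). G (a e)) = (\<Prod>e<N. (G (b e) :: 'a::comm_monoid_mult))"
  by (rule prod.cong) auto

lemma tri_prod_hankel_add_two: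
  "tri_prod (\<lambda>i j. G (i+j)) (N+2) =
     tri_prod (\<lambda>i j. G (i+j)) N * (\<Prod>e<N. G (e + N + 2)) * (\<Prod>e<Suc N. (G (e + N + 3) :: 'a::comm_monoid_mult))"
proof -
  have a: "(\<Prod>i\<in>{1..N}. G (i + Suc N)) = (\<Prod>e<N. G (e + N + 2))"
    by (simp only: One_nat_def prod.atLeast1_atMost_eq) (rule prod_lessThan_cong_arg, simp)
  have b: "(\<Prod>i\<in>{1..Suc N}. G (i + Suc (Suc N))) = (\<Prod>e<Suc N. G (e + N + 3))"
    by (simp only: One_nat_def prod.atLeast1_atMost_eq) (rule prod_lessThan_cong_arg, simp)
  have e: "N + 2 = Suc (Suc N)" by simp
  show ?thesis unfolding e tri_prod_Suc a b by (simp only: mult_ac)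
qed

lemma prod_rectangle_Suc:
  fixes K W :: nat
  shows "(\<Prod>r<K+1. \<Prod>i<W+2. G (2*r+i+3)) = (\<Prod>r<K. \<Prod>i<W. G (2*r+i+3)) * (\<Prod>e<2*K. G (W+3+e))
     * (\<Prod>i<W+2. (G (2*K+i+3) :: 'a::comm_monoid_mult))"
proof -
  have c: "(\<Prod>i<W+2. G (2*r+i+3)) = (\<Prod>i<W. G (2*r+i+3)) * (G (W+3+2*r) * G (W+3+(2*r+1)))" for r
  proof -
    have "W + 2 = Suc (Suc W)" by simp
    then have "(\<Prod>i<W+2. G (2*r+i+3)) = (\<Prod>i<W. G (2*r+i+3)) * G (2*r+W+3) * G (2*r+Suc W+3)"
      by simp
    also have "2*r+W+3 = W+3+2*r" by simp
    also have "2*r+Suc W+3 = W+3+(2*r+1)" by simp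
    finally show ?thesis by (simp only: mult_ac)
  qed
  have "(\<Prod>r<K. \<Prod>i<W+2. G (2*r+i+3)) = (\<Prod>r<K. (\<Prod>i<W. G (2*r+i+3)) * (G (W+3+2*r) * G (W+3+(2*r+1))))"
    by (simp only: c)
  also have "\<dots> = (\<Prod>r<K. \<Prod>i<W. G (2*r+i+3)) * (\<Prod>r<K. G (W+3+2*r) * G (W+3+(2*r+1)))"
    by (rule prod.distrib)
  also have "(\<Prod>r<K. G (W+3+2*r) * G (W+3+(2*r+1))) = (\<Prod>e<2*K. G (W+3+e))"
    by (rule prod_lessThan_double[where g="\<lambda>e. G (W+3+e)"])
  finally have h: "(\<Prod>r<K. \<Prod>i<W+2. G (2*r+i+3)) = (\<Prod>r<K. \<Prod>i<W. G (2*r+i+3)) * (\<Prod>e<2*K. G (W+3+e))" .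
  have e: "K + 1 = Suc K" by simp
  show ?thesis unfolding e prod.lessThan_Suc h by (simp only: mult_ac)
qed

lemma tri_prod_hankel_even:
  "tri_prod (\<lambda>i j. G (i+j)) (2*k+2) = (\<Prod>r<k+1. \<Prod>i<2*k+1. (G (2*r+i+3) :: 'a::comm_monoid_mult))"
proof (induction k)
  case 0
  have "{Suc 0<..Suc (Suc 0)} = {Suc (Suc 0)}" by auto
  then show ?case by (simp add: numeral_2_eq_2 tri_prod_Suc tri_prod_def numeral_3_eq_3)
next
  case (Suc k)
  have e1: "2 * Suc k + 2 = (2*k+2) + 2" "Suc k + 1 = (k+1)+1" "2 * Suc k + 1 = (2*k+1)+2" by simp_all
  have x1: "(\<Prod>e<2*k+2. G (e + (2*k+2) + 2)) = (\<Prod>e<2*(k+1). G ((2*k+1)+3+e))"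
  proof -
    have "2*(k+1) = 2*k+2" by simp
    then show ?thesis by (simp only:) (rule prod_lessThan_cong_arg, simp)
  qed
  have x2: "(\<Prod>e<Suc (2*k+2). G (e + (2*k+2) + 3)) = (\<Prod>i<(2*k+1)+2. G (2*(k+1)+i+3))"
  proof -
    have "(2*k+1)+2 = Suc (2*k+2)" by simp
    then show ?thesis by (simp only:) (rule prod_lessThan_cong_arg, simp)
  qed
  show ?case
    unfolding e1 tri_prod_hankel_add_two[where N="2*k+2"] Suc.IH prod_rectangle_Suc x1 x2 by (simp only: mult_ac)
qed

lemma tri_prod_hankel_odd:
  "tri_prod (\<lambda>i j. G (i+j)) (2*k+1) = (\<Prod>r<k. \<Prod>i<2*k+1. (G (2*r+i+3) :: 'a::comm_monoid_mult))"
proof (induction k)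
  case 0 then show ?case by (simp add: tri_prod_def)
next
  case (Suc k)
  have e1: "2 * Suc k + 1 = (2*k+1) + 2" by simp
  have x1: "(\<Prod>e<2*k+1. G (e + (2*k+1) + 2)) = G (2*k+3) * (\<Prod>e<2*k. G (2*k+1+3+e))"
  proof -
    have "(\<Prod>e<2*k+1. G (e + (2*k+1) + 2)) = (\<Prod>e<Suc (2*k). G (e + (2*k+1) + 2))" by simp
    also have "\<dots> = G (0 + (2*k+1) + 2) * (\<Prod>e<2*k. G (Suc e + (2*k+1) + 2))"
      by (rule prod.lessThan_Suc_shift)
    also have "0 + (2*k+1) + 2 = 2*k+3" by simp
    also have "(\<Prod>e<2*k. G (Suc e + (2*k+1) + 2)) = (\<Prod>e<2*k. G (2*k+1+3+e))"
      by (rule prod_lessThan_cong_arg) simp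
    finally show ?thesis .
  qed
  have x2: "(\<Prod>i<(2*k+1)+2. G (2*k+i+3)) = G (2*k+3) * (\<Prod>e<Suc (2*k+1). G (e + (2*k+1) + 3))"
  proof -
    have "(\<Prod>i<(2*k+1)+2. G (2*k+i+3)) = (\<Prod>i<Suc (2*k+2). G (2*k+i+3))" by simp
    also have "\<dots> = G (2*k+0+3) * (\<Prod>i<2*k+2. G (2*k+Suc i+3))"
      by (rule prod.lessThan_Suc_shift)
    also have "2*k+0+3 = 2*k+3" by simp
    also have "(\<Prod>i<2*k+2. G (2*k+Suc i+3)) = (\<Prod>e<Suc (2*k+1). G (e + (2*k+1) + 3))"
    proof -
      have "Suc (2*k+1) = 2*k+2" by simp
      then show ?thesis by (simp only:) (rule prod_lessThan_cong_arg, simp)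
    qed
    finally show ?thesis .
  qed
  show ?case
    unfolding e1 tri_prod_hankel_add_two Suc.IH unfolding Suc_eq_plus1 prod_rectangle_Suc x1 x2
    by (simp only: mult_ac)
qed

definition interlace :: "(nat \<Rightarrow> 'a) \<Rightarrow> (nat \<Rightarrow> 'a) \<Rightarrow> nat \<Rightarrow> 'a" where
  "interlace f g j = (if odd j then f ((j + 1) div 2) else g (j div 2))"

lemma interlace_odd [simp]: "0 < i \<Longrightarrow> interlace f g (2 * i - Suc 0) = f i"
  by (simp add: interlace_def)

lemma interlace_Suc_double [simp]: "interlace f g (Suc (2 * i)) = f (Suc i)"
  by (simp add: interlace_def)

lemma interlace_even [simp]: "interlace f g (2 * i) = g i"
  by (simp add: interlace_def)

lemma tri_prod_interlace_even:
  "tri_prod (\<lambda>i j. F (interlace f g i) (interlace f g j)) (2 * n) =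
     tri_prod (\<lambda>i j. F (f i) (f j)) n * tri_prod (\<lambda>i j. F (g i) (g j)) n
     * tri_prod_diag (\<lambda>i j. F (f i) (g j)) n * tri_prod (\<lambda>i j. F (g i) (f j)) n"
proof -
  have "tri_prod (\<lambda>i j. F (interlace f g (2 * i - 1)) (interlace f g (2 * j - 1))) n
      = tri_prod (\<lambda>i j. F (f i) (f j)) n"
       "tri_prod_diag (\<lambda>i j. F (interlace f g (2 * i - 1)) (interlace f g (2 * j))) n
      = tri_prod_diag (\<lambda>i j. F (f i) (g j)) n"
       "tri_prod (\<lambda>i j. F (interlace f g (2 * i)) (interlace f g (2 * j - 1))) n
      = tri_prod (\<lambda>i j. F (g i) (f j)) n"
    by (intro tri_prod_cong tri_prod_diag_cong; simp)+
  then show ?thesis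
    unfolding tri_prod_interleave_even[where F = "\<lambda>i j. F (interlace f g i) (interlace f g j)"] by simp
qed

lemma tri_prod_interlace_odd:
  "tri_prod (\<lambda>i j. F (interlace f g i) (interlace f g j)) (Suc (2 * n)) =
     tri_prod (\<lambda>i j. F (f i) (f j)) (Suc n) * tri_prod (\<lambda>i j. F (g i) (g j)) n
     * tri_prod_diag (\<lambda>i j. F (f i) (g j)) n * tri_prod (\<lambda>i j. F (g i) (f j)) (Suc n)"
proof -
  have "tri_prod (\<lambda>i j. F (interlace f g (2 * i - 1)) (interlace f g (2 * j - 1))) (Suc n)
      = tri_prod (\<lambda>i j. F (f i) (f j)) (Suc n)"
       "tri_prod_diag (\<lambda>i j. F (interlace f g (2 * i - 1)) (interlace f g (2 * j))) n
      = tri_prod_diag (\<lambda>i j. F (f i) (g j)) n"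
       "tri_prod (\<lambda>i j. F (interlace f g (2 * i)) (interlace f g (2 * j - 1))) (Suc n)
      = tri_prod (\<lambda>i j. F (g i) (f j)) (Suc n)"
    by (intro tri_prod_cong tri_prod_diag_cong; simp)+
  then show ?thesis
    unfolding tri_prod_interleave_odd[where F = "\<lambda>i j. F (interlace f g i) (interlace f g j)"] by simp
qed

lemma powi_sum:
  fixes q :: real
  assumes "q \<noteq> 0"
  shows "(\<Prod>j\<in>A. q powi f j) = q powi (\<Sum>j\<in>A. f j)"
  using assms by (induction A rule: infinite_finite_induct) (simp_all add: power_int_add)

lemma tri_prod_powi_diff:
  fixes q :: real
  assumes "q \<noteq> 0"
  shows "tri_prod (\<lambda>i j. q powi h j - q powi h i) N
       = q powi (\<Sum>j=1..N. int (j - 1) * h j) * tri_prod (\<lambda>i j. qdiff q (h i - h j)) N"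
proof -
  have "q powi h j - q powi h i = q powi h j * qdiff q (h i - h j)" for i j
    using assms by (simp add: qdiff_def power_int_diff right_diff_distrib)
  moreover have "(\<Prod>j=1..N. (q powi h j) ^ (j - 1)) = q powi (\<Sum>j=1..N. int (j - 1) * h j)"
    using assms by (simp add: powi_sum power_int_power' mult.commute)
  ultimately show ?thesis
    by (simp add: tri_prod_mult tri_prod_column_const)
qed

lemma prod_qpoch_qq_reverse: "(\<Prod>l=1..N - 1. qpoch q q l) = (\<Prod>k=1..N. qpoch q q (N - k))"
proof -
  have "(\<Prod>l=1..N - 1. qpoch q q l) = (\<Prod>l<N. qpoch q q l)"
  proof (cases "N = 0")
    case False
    then have "{..<N} = insert 0 {1..N - 1}"
      by auto
    then show ?thesis
      by simp
  qed simp
  also have "\<dots> = (\<Prod>k=1..N. qpoch q q (N - k))"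
    by (rule prod.reindex_bij_witness[where i = "\<lambda>k. N - k" and j = "\<lambda>l. N - l"]) auto
  finally show ?thesis .
qed

lemma prod_qpoch_qq_even:
  "(\<Prod>l=1..2 * n - 1. qpoch q q l) = (\<Prod>i=1..n. qpoch q q (2 * n + 1 - 2 * i)) * (\<Prod>i=1..n. qpoch q q (2 * n - 2 * i))"
proof -
  have "(\<Prod>i=1..n. qpoch q q (2 * n - (2 * i - 1)) * qpoch q q (2 * n - 2 * i))
      = (\<Prod>i=1..n. qpoch q q (2 * n + 1 - 2 * i) * qpoch q q (2 * n - 2 * i))"
    by (rule prod.cong[OF refl]) (simp add: Suc_diff_le)
  then show ?thesis
    unfolding prod_qpoch_qq_reverse prod_interleave by (simp add: prod.distrib)
qed

lemma prod_qpoch_qq_odd: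
  "(\<Prod>l=1..2 * Suc m - 1 - 1. qpoch q q l)
     = (\<Prod>i=1..Suc m. qpoch q q (2 * Suc m - 2 * i)) * (\<Prod>i=1..m. qpoch q q (2 * Suc m - 2 * i - 1))"
proof -
  have "(\<Prod>l=1..2 * Suc m - 1 - 1. qpoch q q l) = (\<Prod>k=1..Suc (2 * m). qpoch q q (Suc (2 * m) - k))"
    using prod_qpoch_qq_reverse[of q "Suc (2 * m)"] by simp
  also have "\<dots> = (\<Prod>k=1..2 * m. qpoch q q (Suc (2 * m) - k))"
    by simp
  also have "\<dots> = (\<Prod>i=1..m. qpoch q q (Suc (2 * m) - (2 * i - 1)) * qpoch q q (Suc (2 * m) - 2 * i))"
    by (rule prod_interleave)
  also have "\<dots> = (\<Prod>i=1..m. qpoch q q (2 * Suc m - 2 * i) * qpoch q q (2 * Suc m - 2 * i - 1))"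
    by (rule prod.cong[OF refl]) (simp add: Suc_diff_le)
  finally show ?thesis
    by (simp add: prod.distrib prod.cl_ivl_Suc)
qed

section \<open>The product over p\<close>

lemma prodinf_telescope:
  fixes Y :: "nat \<Rightarrow> 'a::real_normed_field"
  assumes nonzero: "\<And>p. Y p \<noteq> 0" and lim: "Y \<longlonglongrightarrow> 1"
  shows "(\<Prod>p. Y p / Y (p + K)) = (\<Prod>r<K. Y r)"
proof (rule prodinf_eq_prod_lim')
  have window_nonzero: "(\<Prod>r<K. Y (a + r)) \<noteq> 0" for a
    using nonzero by (simp add: prod_zero_iff)
  have window_Suc: "(\<Prod>r<K. Y (a + r)) * Y (a + K) = Y a * (\<Prod>r<K. Y (Suc a + r))" for a
    using prod.lessThan_Suc[of "\<lambda>r. Y (a + r)" K] prod.lessThan_Suc_shift[of "\<lambda>r. Y (a + r)" K]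
    by simp
  have partial: "(\<Prod>p<P. Y p / Y (p + K)) = (\<Prod>r<K. Y r) / (\<Prod>r<K. Y (P + r))" for P
  proof (induction P)
    case 0
    then show ?case
      using window_nonzero[of 0] by simp
  next
    case (Suc P)
    have "(\<Prod>p<Suc P. Y p / Y (p + K)) =
        (\<Prod>r<K. Y r) * Y P / ((\<Prod>r<K. Y (P + r)) * Y (P + K))"
      by (simp add: Suc.IH)
    also have "\<dots> = (\<Prod>r<K. Y r) * Y P / (Y P * (\<Prod>r<K. Y (Suc P + r)))"
      by (simp only: window_Suc)
    also have "\<dots> = (\<Prod>r<K. Y r) / (\<Prod>r<K. Y (Suc P + r))"
      using nonzero[of P] by simp
    finally show ?case .
  qed
  have "(\<lambda>P. \<Prod>r<K. Y (P + r)) \<longlonglongrightarrow> (\<Prod>r<K. 1)"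
    by (intro tendsto_prod LIMSEQ_ignore_initial_segment[OF lim])
  then have "(\<lambda>P. (\<Prod>r<K. Y r) / (\<Prod>r<K. Y (P + r))) \<longlonglongrightarrow> (\<Prod>r<K. Y r) / 1"
    by (intro tendsto_divide tendsto_const) auto
  then show "(\<lambda>P. \<Prod>p<P. Y p / Y (p + K)) \<longlonglongrightarrow> (\<Prod>r<K. Y r)"
    by (simp add: partial)
  show "(\<Prod>r<K. Y r) \<noteq> 0"
    using window_nonzero[of 0] by simp
qed

(* The p-th factor is Y p / Y (p + K) with Y p = (x q^(2p); q)_a, so the product telescopes. *)
lemma prodinf_qpinf_quotient:
  fixes q x :: real
  assumes q: "\<bar>q\<bar> < 1" and nz: "qpinf x q \<noteq> 0"
  shows "(\<Prod>p. qpinf (x * (q\<^sup>2) ^ p) q * qpinf (x * q ^ a * (q\<^sup>2) ^ (p + K)) q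
            / (qpinf (x * (q\<^sup>2) ^ (p + K)) q * qpinf (x * q ^ a * (q\<^sup>2) ^ p) q))
         = (\<Prod>r<K. qpoch (x * (q\<^sup>2) ^ r) q a)"
proof -
  define Y where "Y p = qpoch (x * (q\<^sup>2) ^ p) q a" for p
  have split: "qpinf (x * (q\<^sup>2) ^ p) q = Y p * qpinf (x * q ^ a * (q\<^sup>2) ^ p) q" for p
    using qpinf_split[OF q, of "x * (q\<^sup>2) ^ p" a] unfolding Y_def by (simp add: mult_ac)
  have tail_nonzero: "qpinf (x * q ^ a * (q\<^sup>2) ^ p) q \<noteq> 0" for p
    using qpinf_shift_nonzero[OF q nz, of "a + 2 * p"] by (simp add: power_add power_mult mult.assoc)
  have factor: "qpinf (x * (q\<^sup>2) ^ p) q * qpinf (x * q ^ a * (q\<^sup>2) ^ (p + K)) q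
      / (qpinf (x * (q\<^sup>2) ^ (p + K)) q * qpinf (x * q ^ a * (q\<^sup>2) ^ p) q) = Y p / Y (p + K)" for p
    unfolding split using tail_nonzero[of p] tail_nonzero[of "p + K"] by simp
  have "1 - x * (q\<^sup>2) ^ p * q ^ i \<noteq> 0" for p i
    using qpinf_nonzero_factor[OF q nz, of "2 * p + i"] by (simp add: power_add power_mult mult.assoc)
  then have Y_nonzero: "Y p \<noteq> 0" for p
    unfolding Y_def qpoch_def by (simp add: prod_zero_iff)
  have "(\<lambda>p. (q\<^sup>2) ^ p) \<longlonglongrightarrow> 0"
    using q by (intro LIMSEQ_power_zero) (simp add: abs_square_less_1)
  then have "(\<lambda>p. \<Prod>i<a. 1 - x * (q\<^sup>2) ^ p * q ^ i) \<longlonglongrightarrow> (\<Prod>i<a. 1 - x * 0 * q ^ i)"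
    by (intro tendsto_prod tendsto_diff tendsto_mult tendsto_const)
  then have Y_lim: "Y \<longlonglongrightarrow> 1"
    unfolding Y_def qpoch_def by simp
  show ?thesis
    using prodinf_telescope[OF Y_nonzero Y_lim, of K] unfolding factor Y_def .
qed

lemma qpoch_qsquare_hankel:
  fixes q z :: real
  shows "qpoch (z * (q * z) * (q\<^sup>2) ^ r) q a = (\<Prod>i<a. 1 - z\<^sup>2 * q ^ (2 * r + i + 3 - 2))"
  unfolding qpoch_def by (simp add: power_add power_mult power_mult_distrib power2_eq_square mult_ac)

lemma prodinf_even:
  fixes q z :: real
  assumes q: "0 < q" "q < 1" and n: "n \<ge> 1" and nz: "qpinf (z * (q * z)) q \<noteq> 0"
  shows "(\<Prod>p. qpinf (z * (q * z) * (q\<^sup>2) ^ p) q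
              * qpinf (inverse q * (q\<^sup>2) ^ n * z * (q * z) * (q\<^sup>2) ^ (p + n)) q
            / (qpinf (z * (q * z) * (q\<^sup>2) ^ (p + n)) q
              * qpinf (inverse q * (q\<^sup>2) ^ n * z * (q * z) * (q\<^sup>2) ^ p) q))
         = tri_prod (\<lambda>i j. 1 - z\<^sup>2 * q ^ (i + j - 2)) (2 * n)"
  (is "?P = _")
proof -
  obtain k where k: "n = k + 1"
    using n by (metis add.commute le_Suc_ex)
  have "(q\<^sup>2) ^ n = q * q ^ (2 * k + 1)"
    unfolding k power_mult[symmetric] by simp
  then have "inverse q * (q\<^sup>2) ^ n = q ^ (2 * k + 1)"
    using q by simp
  then have w: "inverse q * (q\<^sup>2) ^ n * z * (q * z) = z * (q * z) * q ^ (2 * k + 1)"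
    by (simp add: mult_ac)
  have "?P = (\<Prod>r<n. qpoch (z * (q * z) * (q\<^sup>2) ^ r) q (2 * k + 1))"
    unfolding w by (rule prodinf_qpinf_quotient) (use q nz in auto)
  also have "\<dots> = (\<Prod>r<k + 1. \<Prod>i<2 * k + 1. 1 - z\<^sup>2 * q ^ (2 * r + i + 3 - 2))"
    unfolding qpoch_qsquare_hankel k ..
  also have "\<dots> = tri_prod (\<lambda>i j. 1 - z\<^sup>2 * q ^ (i + j - 2)) (2 * k + 2)"
    by (rule tri_prod_hankel_even[symmetric])
  finally show ?thesis
    unfolding k by (simp add: algebra_simps)
qed

lemma prodinf_odd:
  fixes q z :: real
  assumes q: "0 < q" "q < 1" and n: "n \<ge> 1" and nz: "qpinf (z * (q * z)) q \<noteq> 0"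
  shows "(\<Prod>p. qpinf (z * (q * z) * (q\<^sup>2) ^ p) q
              * qpinf (q * (q\<^sup>2) ^ (n - 1) * z * (q * z) * (q\<^sup>2) ^ (p + n - 1)) q
            / (qpinf (q * (q\<^sup>2) ^ (n - 1) * z * (q * z) * (q\<^sup>2) ^ p) q
              * qpinf (z * (q * z) * (q\<^sup>2) ^ (p + n - 1)) q))
         = tri_prod (\<lambda>i j. 1 - z\<^sup>2 * q ^ (i + j - 2)) (2 * n - 1)"
  (is "?P = _")
proof -
  obtain k where k: "n = k + 1"
    using n by (metis add.commute le_Suc_ex)
  have u: "q * (q\<^sup>2) ^ (n - 1) * z * (q * z) = z * (q * z) * q ^ (2 * k + 1)"
    unfolding k by (simp add: power_mult[symmetric] mult_ac)
  have shift: "p + n - 1 = p + k" for p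
    unfolding k by simp
  have "?P = (\<Prod>p. qpinf (z * (q * z) * (q\<^sup>2) ^ p) q
              * qpinf (z * (q * z) * q ^ (2 * k + 1) * (q\<^sup>2) ^ (p + k)) q
            / (qpinf (z * (q * z) * (q\<^sup>2) ^ (p + k)) q
              * qpinf (z * (q * z) * q ^ (2 * k + 1) * (q\<^sup>2) ^ p) q))"
    unfolding u shift by (simp add: mult.commute)
  also have "\<dots> = (\<Prod>r<k. qpoch (z * (q * z) * (q\<^sup>2) ^ r) q (2 * k + 1))"
    by (rule prodinf_qpinf_quotient) (use q nz in auto)
  also have "\<dots> = (\<Prod>r<k. \<Prod>i<2 * k + 1. 1 - z\<^sup>2 * q ^ (2 * r + i + 3 - 2))"
    unfolding qpoch_qsquare_hankel ..
  also have "\<dots> = tri_prod (\<lambda>i j. 1 - z\<^sup>2 * q ^ (i + j - 2)) (2 * k + 1)"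
    by (rule tri_prod_hankel_odd[symmetric])
  finally show ?thesis
    unfolding k by simp
qed

section \<open>Interlacing partitions\<close>

(* Up to a common additive constant, mu_pos mu i and ka_pos ka i are h_(2i-1) and h_(2i); at
   t = q^2 every factor of E_Q, E_P and psi is a qdiff of a difference of these positions. *)
definition mu_pos :: "(nat \<Rightarrow> nat) \<Rightarrow> nat \<Rightarrow> int" where
  "mu_pos mu i = int (mu i) - 2 * int i"

definition ka_pos :: "(nat \<Rightarrow> nat) \<Rightarrow> nat \<Rightarrow> int" where
  "ka_pos ka i = int (ka i) - 2 * int i - 1"

locale interlacing =
  fixes n :: nat and mu ka :: "nat \<Rightarrow> nat"
  assumes interlace: "\<And>j. 1 \<le> j \<Longrightarrow> j \<le> n \<Longrightarrow> ka j \<le> mu j \<and> mu (Suc j) \<le> ka j"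
    and vanish: "\<And>i. n < i \<Longrightarrow> mu i = 0 \<and> ka i = 0"
begin

lemma ka_antimono:
  assumes "1 \<le> i" "i \<le> j"
  shows "ka j \<le> ka i"
  using assms(2)
proof (induction j rule: dec_induct)
  case (step j)
  show ?case
  proof (cases "Suc j \<le> n")
    case True
    then have "ka (Suc j) \<le> mu (Suc j)" "mu (Suc j) \<le> ka j"
      using interlace[of "Suc j"] interlace[of j] step assms(1) by auto
    then show ?thesis
      using step.IH by simp
  qed (use vanish in simp)
qed simp

lemma mu_antimono:
  assumes "1 \<le> i" "i \<le> j"
  shows "mu j \<le> mu i"
  using assms(2)
proof (induction j rule: dec_induct)
  case (step j)
  show ?case
  proof (cases "j \<le> n")
    case True
    then have "mu (Suc j) \<le> ka j" "ka j \<le> mu j"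
      using interlace[of j] step assms(1) by auto
    then show ?thesis
      using step.IH by simp
  qed (use vanish in simp)
qed simp

lemma ka_le_mu_diag: "1 \<le> i \<Longrightarrow> ka i \<le> mu i"
  using interlace[of i] vanish[of i] by (cases "i \<le> n") auto

lemma ka_le_mu: "1 \<le> i \<Longrightarrow> i \<le> j \<Longrightarrow> ka j \<le> mu i"
  using ka_antimono[of i j] ka_le_mu_diag[of i] by simp

lemma mu_Suc_le_ka: "1 \<le> i \<Longrightarrow> i \<le> j \<Longrightarrow> mu (Suc j) \<le> ka i"
proof -
  assume ij: "1 \<le> i" "i \<le> j"
  have "mu (Suc j) \<le> ka j"
    using interlace[of j] vanish[of "Suc j"] ij by (cases "j \<le> n") auto
  also have "ka j \<le> ka i"
    using ka_antimono ij .
  finally show ?thesis .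
qed

lemma support_ka: "{i. 1 \<le> i \<and> ka i \<noteq> 0} \<subseteq> {1..n}"
proof
  fix i
  assume "i \<in> {i. 1 \<le> i \<and> ka i \<noteq> 0}"
  then show "i \<in> {1..n}"
    using vanish[of i] by (cases "n < i") auto
qed

lemma plen_le: "plen ka \<le> n"
  unfolding plen_def using card_mono[OF _ support_ka] by simp

lemma ka_beyond_plen:
  assumes "plen ka < j"
  shows "ka j = 0"
proof (rule ccontr)
  assume "ka j \<noteq> 0"
  have "{1..j} \<subseteq> {i. 1 \<le> i \<and> ka i \<noteq> 0}"
  proof
    fix i
    assume "i \<in> {1..j}"
    then have "ka j \<le> ka i"
      by (intro ka_antimono) auto
    then show "i \<in> {i. 1 \<le> i \<and> ka i \<noteq> 0}"
      using \<open>ka j \<noteq> 0\<close> \<open>i \<in> {1..j}\<close> by auto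
  qed
  then have "card {1..j} \<le> plen ka"
    unfolding plen_def by (intro card_mono finite_subset[OF support_ka]) auto
  then have "j \<le> plen ka"
    by simp
  with assms show False
    by simp
qed

end

context interlacing
begin

abbreviation a :: "nat \<Rightarrow> int" where "a \<equiv> mu_pos mu"
abbreviation b :: "nat \<Rightarrow> int" where "b \<equiv> ka_pos ka"

definition psi_factor :: "real \<Rightarrow> nat \<Rightarrow> nat \<Rightarrow> real" where
  "psi_factor q i j = qdiff q (a i - b j) * qdiff q (b i - a (Suc j))
     / (qdiff q (b i - b j + 1) * qdiff q (a i - a (Suc j) - 1))"

lemma psi_term_qsquare:
  assumes q: "0 < q" "q < 1" and ij: "1 \<le> i" "i \<le> j"
  shows "qf q (q\<^sup>2) (q powi (int (ka i) - int (ka j)) * (q\<^sup>2) ^ (j - i))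
        * qf q (q\<^sup>2) (q powi (int (mu i) - int (mu (Suc j))) * (q\<^sup>2) ^ (j - i))
        / (qf q (q\<^sup>2) (q powi (int (mu i) - int (ka j)) * (q\<^sup>2) ^ (j - i))
           * qf q (q\<^sup>2) (q powi (int (ka i) - int (mu (Suc j))) * (q\<^sup>2) ^ (j - i)))
      = psi_factor q i j"
proof -
  have d: "int (j - i) = int j - int i"
    using ij by simp
  have "ka j \<le> ka i" "mu (Suc j) \<le> mu i" "ka j \<le> mu i" "mu (Suc j) \<le> ka i"
    using ka_antimono[OF ij] mu_antimono[of i "Suc j"] ka_le_mu[OF ij] mu_Suc_le_ka[OF ij] ij
    by auto
  from this[THEN qf_qsquare_qdiff[OF q, of _ _ "j - i"]]
  show ?thesis
    unfolding psi_factor_def d mu_pos_def ka_pos_def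
    by (simp add: algebra_simps divide_inverse inverse_mult_distrib)
qed

lemma psi_factor_beyond_plen:
  assumes q: "0 < q" "q < 1" and ij: "1 \<le> i" "i \<le> j" "j \<le> n" "plen ka < j"
  shows "psi_factor q i j = 1"
proof -
  have ka0: "ka j = 0"
    using ka_beyond_plen assms by simp
  then have mu0: "mu (Suc j) = 0"
    using interlace[of j] ij by simp
  have shifts: "a i - b j = a i - a (Suc j) - 1" "b i - a (Suc j) = b i - b j + 1"
    using ka0 mu0 by (simp_all add: mu_pos_def ka_pos_def)
  have "a i - a (Suc j) - 1 > 0" "b i - b j + 1 > 0"
    using ka0 mu0 ij by (simp_all add: mu_pos_def ka_pos_def)
  then have "qdiff q (a i - a (Suc j) - 1) \<noteq> 0" "qdiff q (b i - b j + 1) \<noteq> 0"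
    by (simp_all add: qdiff_nonzero q)
  then show ?thesis
    unfolding psi_factor_def shifts by (simp add: mult.commute)
qed

lemma psi_qsquare:
  assumes q: "0 < q" "q < 1"
  shows "psi q (q\<^sup>2) mu ka = tri_prod_diag (psi_factor q) n"
proof -
  have "tri_prod_diag (psi_factor q) n = (\<Prod>i\<in>{1..n}. \<Prod>j\<in>{i..plen ka}. psi_factor q i j)"
    unfolding tri_prod_diag_def
    by (rule prod.cong[OF refl], rule prod.mono_neutral_right)
      (auto intro: psi_factor_beyond_plen[OF q] simp: plen_le)
  also have "\<dots> = (\<Prod>i\<in>{1..plen ka}. \<Prod>j\<in>{i..plen ka}. psi_factor q i j)"
    using plen_le by (intro prod.mono_neutral_right) auto
  also have "\<dots> = psi q (q\<^sup>2) mu ka"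
    unfolding psi_def by (intro prod.cong refl psi_term_qsquare[OF q, symmetric]) auto
  finally show ?thesis ..
qed

end

section \<open>E_P, E_Q and psi at t = q^2\<close>

lemma EQ_factor_even:
  assumes q: "0 < q" "q < 1" and i: "1 \<le> i" "i \<le> n"
  shows "qpoch ((q\<^sup>2)^n * (q\<^sup>2) powi (1 - int i)) q m / qpoch q q (m + 2 * (n - i))
       = qdiff q (int (m + 2*n + 1 - 2*i)) / qpoch q q (2*n + 1 - 2*i)"
proof -
  have qnz: "q \<noteq> 0" using q by simp
  define e where "e = 2*n + 1 - 2*i"
  have arg: "(q\<^sup>2)^n * (q\<^sup>2) powi (1 - int i) = q ^ Suc e"
    unfolding qsquare_power_eq_powi powi_mult_qsquare_powi[OF qnz] by (rule powi_of_nat_eq) (use i in \<open>simp add: e_def\<close>)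
  have len: "e + m = Suc (m + 2 * (n - i))" using i unfolding e_def by simp
  have len_Suc: "m + 2*n + 1 - 2*i = Suc (m + 2 * (n - i))" using i by simp
  have nz: "qpoch q q (m + 2 * (n - i)) \<noteq> 0" "qpoch q q e \<noteq> 0" using qpoch_qq_nonzero[OF q] by auto
  show ?thesis unfolding arg qpoch_qpower[OF q] len len_Suc qpoch_qq_Suc qdiff_of_nat e_def[symmetric]
    using nz by (simp add: field_simps)
qed

lemma EP_factor_even:
  assumes q: "0 < q" "q < 1" and i: "1 \<le> i" "i \<le> n"
  shows "qpoch (inverse q * (q\<^sup>2)^n * (q\<^sup>2) powi (1 - int i)) q k / qpoch (q\<^sup>2) q (k + 2 * (n - i))
       = (1 - q) / (qpoch q q (2*n - 2*i) * qdiff q (int (k + 2*n + 1 - 2*i)))"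
proof -
  have qnz: "q \<noteq> 0" using q by simp
  define e where "e = 2*n - 2*i"
  have arg0: "inverse q * (q\<^sup>2)^n = q powi (2 * int n - 1)"
  proof -
    have "q powi (-1 + 2 * int n) = q powi (-1) * q powi (2 * int n)" by (rule power_int_add) (use qnz in simp)
    then show ?thesis unfolding qsquare_power_eq_powi by (simp add: power_int_minus)
  qed
  have arg: "inverse q * (q\<^sup>2)^n * (q\<^sup>2) powi (1 - int i) = q ^ Suc e"
    unfolding arg0 powi_mult_qsquare_powi[OF qnz] by (rule powi_of_nat_eq) (use i in \<open>simp add: e_def\<close>)
  have len: "k + 2 * (n - i) = k + e" unfolding e_def by simp
  have len_Suc: "k + 2*n + 1 - 2*i = Suc (k + e)" using i unfolding e_def by simp
  have comm: "e + k = k + e" by simp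
  have "q ^ Suc (k + e) < 1" using q by (intro power_Suc_less_one) auto
  then have nz: "qpoch q q (k + e) \<noteq> 0" "qpoch q q e \<noteq> 0" "1 - q \<noteq> 0" "1 - q ^ Suc (k + e) \<noteq> 0"
    using qpoch_qq_nonzero[OF q] q by auto
  show ?thesis
    unfolding arg qpoch_qpower[OF q] len len_Suc qpoch_qsquare[OF q] qpoch_qq_Suc qdiff_of_nat e_def[symmetric] comm
    using nz by (simp add: field_simps)
qed

lemma EQ_factor_odd:
  assumes q: "0 < q" "q < 1" and i: "1 \<le> i" "i \<le> n"
  shows "qpoch (q * (q\<^sup>2)^(n-1) * (q\<^sup>2) powi (1 - int i)) q m / qpoch q q (m + 2 * (n - i))
       = 1 / qpoch q q (2*n - 2*i)"
proof -
  have qnz: "q \<noteq> 0" using q by simp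
  define e where "e = 2*n - 2*i"
  have arg0: "q * (q\<^sup>2)^(n-1) = q powi (2 * int n - 1)"
  proof -
    have "q powi (1 + 2 * int (n - 1)) = q powi 1 * q powi (2 * int (n - 1))" by (rule power_int_add) (use qnz in simp)
    moreover have "1 + 2 * int (n - 1) = 2 * int n - 1" using i by simp
    ultimately show ?thesis unfolding qsquare_power_eq_powi by simp
  qed
  have arg: "q * (q\<^sup>2)^(n-1) * (q\<^sup>2) powi (1 - int i) = q ^ Suc e"
    unfolding arg0 powi_mult_qsquare_powi[OF qnz] by (rule powi_of_nat_eq) (use i in \<open>simp add: e_def\<close>)
  have len: "m + 2 * (n - i) = e + m" unfolding e_def by simp
  have nz: "qpoch q q (e + m) \<noteq> 0" "qpoch q q e \<noteq> 0" using qpoch_qq_nonzero[OF q] by auto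
  show ?thesis unfolding arg qpoch_qpower[OF q] len e_def[symmetric]
    using nz by (simp add: field_simps)
qed

lemma EP_factor_odd:
  assumes q: "0 < q" "q < 1" and i: "1 \<le> i" "i < n"
  shows "qpoch ((q\<^sup>2)^(n-1) * (q\<^sup>2) powi (1 - int i)) q k / qpoch (q\<^sup>2) q (k + 2 * (n - i))
       = (1 - q) / (qpoch q q (2*n - 2*i - 1) * (qdiff q (int (k + 2*n - 2*i)) * qdiff q (int (k + 2*n - 2*i + 1))))"
proof -
  have qnz: "q \<noteq> 0" using q by simp
  define e where "e = 2*n - 2*i - 1"
  have arg0: "(q\<^sup>2)^(n-1) = q powi (2 * int n - 2)"
    unfolding qsquare_power_eq_powi using i by simp
  have arg: "(q\<^sup>2)^(n-1) * (q\<^sup>2) powi (1 - int i) = q ^ Suc e"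
    unfolding arg0 powi_mult_qsquare_powi[OF qnz] by (rule powi_of_nat_eq) (use i in \<open>simp add: e_def\<close>)
  have len: "k + 2 * (n - i) = Suc (k + e)" using i unfolding e_def by simp
  have len_Suc: "k + 2*n - 2*i = Suc (k + e)" "Suc (k + e) + 1 = Suc (Suc (k + e))" using i unfolding e_def by simp_all
  have comm: "e + k = k + e" by simp
  have "q ^ Suc (k + e) < 1" "q ^ Suc (Suc (k + e)) < 1" using q by (intro power_Suc_less_one; simp)+
  then have nz: "qpoch q q (k + e) \<noteq> 0" "qpoch q q e \<noteq> 0" "1 - q \<noteq> 0" "1 - q ^ Suc (k + e) \<noteq> 0"
     "1 - q ^ Suc (Suc (k + e)) \<noteq> 0"
    using qpoch_qq_nonzero[OF q] q by auto
  have qpoch_Suc_Suc: "qpoch q q (Suc (Suc (k + e))) = qpoch q q (k + e) * (1 - q ^ Suc (k + e)) * (1 - q ^ Suc (Suc (k + e)))"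
    by (simp only: qpoch_qq_Suc)
  have cancel: "(P / A) / (P * X * Y / c) = c / (A * (X * Y))"
    if "P \<noteq> 0" "A \<noteq> 0" "X \<noteq> 0" "Y \<noteq> 0" for P A X Y c :: real
    using that by (simp add: field_simps)
  show ?thesis unfolding arg qpoch_qpower[OF q] len len_Suc qpoch_qsquare[OF q] qpoch_Suc_Suc qdiff_of_nat e_def[symmetric] comm
    by (rule cancel) (use nz in auto)
qed

lemma EQ_qsquare:
  assumes q: "0 < q"
  shows "EQ q (q\<^sup>2) 2 n u mu = (q\<^sup>2) ^ (\<Sum>i=1..n. (i - 1) * mu i)
     * tri_prod (\<lambda>i j. qdiff q (mu_pos mu i - mu_pos mu j - 1) * qdiff q (mu_pos mu i - mu_pos mu j)) n
     * (\<Prod>i=1..n. qpoch (u * (q\<^sup>2) powi (1 - int i)) q (mu i) / qpoch q q (mu i + 2 * (n - i)))"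
proof -
  have "qpoch (q powi (int (mu i) - int (mu j) + 1) * (q\<^sup>2) ^ (j - i - 1)) q 2
      = qdiff q (mu_pos mu i - mu_pos mu j - 1) * qdiff q (mu_pos mu i - mu_pos mu j)" if "i < j" for i j
  proof -
    have e: "int (mu i) - int (mu j) + 1 + 2 * int (j - i - 1) = mu_pos mu i - mu_pos mu j - 1"
      using that by (simp add: mu_pos_def of_nat_diff)
    have "q powi (int (mu i) - int (mu j) + 1) * (q\<^sup>2) ^ (j - i - 1)
        = q powi (mu_pos mu i - mu_pos mu j - 1)"
      unfolding powi_mult_qsquare_power[OF less_imp_neq[OF q, symmetric]] e ..
    moreover have "q powi (mu_pos mu i - mu_pos mu j - 1) * q = q powi (mu_pos mu i - mu_pos mu j)"
      using q by (simp add: power_int_add_1[symmetric])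
    ultimately show ?thesis
      by (simp add: qpoch_def numeral_2_eq_2 qdiff_def)
  qed
  then show ?thesis
    unfolding EQ_def tri_prod_def by (intro arg_cong2[where f = "(*)"] refl prod.cong) auto
qed

lemma EP_qsquare:
  assumes q: "0 < q"
  shows "EP q (q\<^sup>2) 2 n w ka = (q\<^sup>2) ^ (\<Sum>i=1..n. (i - 1) * ka i)
     * tri_prod (\<lambda>i j. qdiff q (ka_pos ka i - ka_pos ka j) * qdiff q (ka_pos ka i - ka_pos ka j + 1)) n
     * (\<Prod>i=1..n. qpoch (w * (q\<^sup>2) powi (1 - int i)) q (ka i) / qpoch (q\<^sup>2) q (ka i + 2 * (n - i)))"
proof -
  have "qpoch (q powi (int (ka i) - int (ka j)) * (q\<^sup>2) ^ (j - i)) q 2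
      = qdiff q (ka_pos ka i - ka_pos ka j) * qdiff q (ka_pos ka i - ka_pos ka j + 1)" if "i < j" for i j
  proof -
    have e: "int (ka i) - int (ka j) + 2 * int (j - i) = ka_pos ka i - ka_pos ka j"
      using that by (simp add: ka_pos_def of_nat_diff)
    have "q powi (int (ka i) - int (ka j)) * (q\<^sup>2) ^ (j - i) = q powi (ka_pos ka i - ka_pos ka j)"
      unfolding powi_mult_qsquare_power[OF less_imp_neq[OF q, symmetric]] e ..
    moreover have "q powi (ka_pos ka i - ka_pos ka j) * q = q powi (ka_pos ka i - ka_pos ka j + 1)"
      using q by (simp add: power_int_add_1[symmetric])
    ultimately show ?thesis
      by (simp add: qpoch_def numeral_2_eq_2 qdiff_def)
  qed
  then show ?thesis
    unfolding EP_def tri_prod_def by (intro arg_cong2[where f = "(*)"] refl prod.cong) auto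
qed

context interlacing
begin

lemma psi_qsquare_expand:
  assumes q: "0 < q" "q < 1"
  shows "psi q (q\<^sup>2) mu ka =
    tri_prod_diag (\<lambda>i j. qdiff q (a i - b j)) n
      * (tri_prod (\<lambda>i j. qdiff q (b i - a j)) n * (\<Prod>i\<in>{1..n}. qdiff q (b i - a (Suc n))))
    / ((tri_prod (\<lambda>i j. qdiff q (b i - b j + 1)) n * qdiff q 1 ^ n)
       * (tri_prod (\<lambda>i j. qdiff q (a i - a j - 1)) n * (\<Prod>i\<in>{1..n}. qdiff q (a i - a (Suc n) - 1))))"
proof -
  have factor: "psi_factor q = (\<lambda>i j. (qdiff q (a i - b j) * qdiff q (b i - a (Suc j)))
      / (qdiff q (b i - b j + 1) * qdiff q (a i - a (Suc j) - 1)))"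
    by (intro ext) (simp only: psi_factor_def)
  have diag: "tri_prod_diag (\<lambda>i j. qdiff q (b i - b j + 1)) n
      = tri_prod (\<lambda>i j. qdiff q (b i - b j + 1)) n * qdiff q 1 ^ n"
    by (simp add: tri_prod_diag_eq)
  show ?thesis
    unfolding psi_qsquare[OF q] factor tri_prod_diag_divide tri_prod_diag_mult diag
      tri_prod_diag_shift[where F = "\<lambda>i j. qdiff q (b i - a j)"]
      tri_prod_diag_shift[where F = "\<lambda>i j. qdiff q (a i - a j - 1)"]
    ..
qed

end

lemma prod_EQ_factor_even:
  assumes q: "0 < q" "q < 1"
  shows "(\<Prod>i=1..n. qpoch ((q\<^sup>2) ^ n * (q\<^sup>2) powi (1 - int i)) q (mu i) / qpoch q q (mu i + 2 * (n - i)))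
       = (\<Prod>i=1..n. qdiff q (int (mu i + 2 * n + 1 - 2 * i))) / (\<Prod>i=1..n. qpoch q q (2 * n + 1 - 2 * i))"
  by (subst prod_dividef[symmetric], rule prod.cong[OF refl], rule EQ_factor_even[OF q]) auto

lemma prod_EP_factor_even:
  assumes q: "0 < q" "q < 1"
  shows "(\<Prod>i=1..n. qpoch (inverse q * (q\<^sup>2) ^ n * (q\<^sup>2) powi (1 - int i)) q (ka i)
                    / qpoch (q\<^sup>2) q (ka i + 2 * (n - i)))
       = (1 - q) ^ n / ((\<Prod>i=1..n. qpoch q q (2 * n - 2 * i)) * (\<Prod>i=1..n. qdiff q (int (ka i + 2 * n + 1 - 2 * i))))"
proof -
  have "(\<Prod>i=1..n. qpoch (inverse q * (q\<^sup>2) ^ n * (q\<^sup>2) powi (1 - int i)) q (ka i)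
                    / qpoch (q\<^sup>2) q (ka i + 2 * (n - i)))
      = (\<Prod>i=1..n. (1 - q) / (qpoch q q (2 * n - 2 * i) * qdiff q (int (ka i + 2 * n + 1 - 2 * i))))"
    by (rule prod.cong[OF refl], rule EP_factor_even[OF q]) auto
  then show ?thesis
    by (simp add: prod_dividef prod.distrib)
qed

lemma prod_EQ_factor_odd:
  assumes q: "0 < q" "q < 1"
  shows "(\<Prod>i=1..n. qpoch (q * (q\<^sup>2) ^ (n - 1) * (q\<^sup>2) powi (1 - int i)) q (mu i) / qpoch q q (mu i + 2 * (n - i)))
       = 1 / (\<Prod>i=1..n. qpoch q q (2 * n - 2 * i))"
proof -
  have "(\<Prod>i=1..n. qpoch (q * (q\<^sup>2) ^ (n - 1) * (q\<^sup>2) powi (1 - int i)) q (mu i) / qpoch q q (mu i + 2 * (n - i)))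
      = (\<Prod>i=1..n. 1 / qpoch q q (2 * n - 2 * i))"
    by (rule prod.cong[OF refl], rule EQ_factor_odd[OF q]) auto
  then show ?thesis
    by (simp add: prod_dividef)
qed

lemma prod_EP_factor_odd:
  assumes q: "0 < q" "q < 1" and n: "n = Suc m" and ka_n: "ka n = 0"
  shows "(\<Prod>i=1..n. qpoch ((q\<^sup>2) ^ (n - 1) * (q\<^sup>2) powi (1 - int i)) q (ka i) / qpoch (q\<^sup>2) q (ka i + 2 * (n - i)))
       = (1 - q) ^ m / ((\<Prod>i=1..m. qpoch q q (2 * n - 2 * i - 1))
           * ((\<Prod>i=1..m. qdiff q (int (ka i + 2 * n - 2 * i))) * (\<Prod>i=1..m. qdiff q (int (ka i + 2 * n - 2 * i + 1)))))"
proof -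
  have "(\<Prod>i=1..n. qpoch ((q\<^sup>2) ^ (n - 1) * (q\<^sup>2) powi (1 - int i)) q (ka i) / qpoch (q\<^sup>2) q (ka i + 2 * (n - i)))
      = (\<Prod>i=1..m. qpoch ((q\<^sup>2) ^ (n - 1) * (q\<^sup>2) powi (1 - int i)) q (ka i) / qpoch (q\<^sup>2) q (ka i + 2 * (n - i)))"
    using ka_n unfolding n by (simp add: prod.cl_ivl_Suc)
  also have "\<dots> = (\<Prod>i=1..m. (1 - q) / (qpoch q q (2 * n - 2 * i - 1)
      * (qdiff q (int (ka i + 2 * n - 2 * i)) * qdiff q (int (ka i + 2 * n - 2 * i + 1)))))"
    by (rule prod.cong[OF refl], rule EP_factor_odd[OF q]) (auto simp: n)
  finally show ?thesis
    by (simp add: prod_dividef prod.distrib)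
qed

context interlacing
begin

lemma tri_prod_mu_pos_nonzero:
  assumes q: "0 < q" "q < 1"
  shows "tri_prod (\<lambda>i j. qdiff q (a i - a j - 1)) N \<noteq> 0"
proof (rule tri_prod_nonzero)
  fix i j :: nat
  assume "1 \<le> i" "i < j"
  then have "a i - a j - 1 > 0"
    using mu_antimono[of i j] by (simp add: mu_pos_def)
  then show "qdiff q (a i - a j - 1) \<noteq> 0"
    using qdiff_nonzero q by simp
qed

lemma tri_prod_ka_pos_nonzero:
  assumes q: "0 < q" "q < 1"
  shows "tri_prod (\<lambda>i j. qdiff q (b i - b j + 1)) N \<noteq> 0"
proof (rule tri_prod_nonzero)
  fix i j :: nat
  assume "1 \<le> i" "i < j"
  then have "b i - b j + 1 > 0"
    using ka_antimono[of i j] by (simp add: ka_pos_def)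
  then show "qdiff q (b i - b j + 1) \<noteq> 0"
    using qdiff_nonzero q by simp
qed

lemma psi_boundary_products:
  "(\<Prod>i\<in>{1..n}. qdiff q (a i - a (Suc n) - 1)) = (\<Prod>i=1..n. qdiff q (int (mu i + 2 * n + 1 - 2 * i)))"
  "(\<Prod>i\<in>{1..n}. qdiff q (b i - a (Suc n))) = (\<Prod>i=1..n. qdiff q (int (ka i + 2 * n + 1 - 2 * i)))"
  using vanish[of "Suc n"] by (auto intro!: prod.cong arg_cong[where f = "qdiff q"] simp: mu_pos_def ka_pos_def)

lemma EQ_EP_psi_even_blocks:
  assumes q: "0 < q" "q < 1"
  shows "EQ q (q\<^sup>2) 2 n ((q\<^sup>2) ^ n) mu * EP q (q\<^sup>2) 2 n (inverse q * (q\<^sup>2) ^ n) ka * psi q (q\<^sup>2) mu ka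
    = (q\<^sup>2) ^ (\<Sum>i=1..n. (i - 1) * mu i) * (q\<^sup>2) ^ (\<Sum>i=1..n. (i - 1) * ka i)
      * (tri_prod (\<lambda>i j. qdiff q (a i - a j)) n * tri_prod (\<lambda>i j. qdiff q (b i - b j)) n
         * tri_prod_diag (\<lambda>i j. qdiff q (a i - b j)) n * tri_prod (\<lambda>i j. qdiff q (b i - a j)) n)
      / ((\<Prod>i=1..n. qpoch q q (2 * n + 1 - 2 * i)) * (\<Prod>i=1..n. qpoch q q (2 * n - 2 * i)))"
proof -
  have "(\<Prod>i=1..n. qdiff q (int (mu i + 2 * n + 1 - 2 * i))) \<noteq> 0"
    "(\<Prod>i=1..n. qdiff q (int (ka i + 2 * n + 1 - 2 * i))) \<noteq> 0"
    by (rule prod_atLeastAtMost_nonzero, rule qdiff_nonzero[OF q], simp)+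
  moreover have "(\<Prod>i=1..n. qpoch q q (2 * n + 1 - 2 * i)) \<noteq> 0" "(\<Prod>i=1..n. qpoch q q (2 * n - 2 * i)) \<noteq> 0"
    by (rule prod_atLeastAtMost_nonzero, rule qpoch_qq_nonzero[OF q])+
  ultimately have nonzero: "(\<Prod>i=1..n. qdiff q (int (mu i + 2 * n + 1 - 2 * i))) \<noteq> 0"
    "(\<Prod>i=1..n. qdiff q (int (ka i + 2 * n + 1 - 2 * i))) \<noteq> 0"
    "(\<Prod>i=1..n. qpoch q q (2 * n + 1 - 2 * i)) \<noteq> 0" "(\<Prod>i=1..n. qpoch q q (2 * n - 2 * i)) \<noteq> 0"
    by blast+
  have cancel: "S1 * (Am * A) * (DA / C1) * (S2 * (B * B1) * (e ^ n / (C2 * DB)))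
      * (AB * (BA * DB) / ((B1 * e ^ n) * (Am * DA))) = S1 * S2 * (A * B * AB * BA) / (C1 * C2)"
    if "Am \<noteq> 0" "B1 \<noteq> 0" "DA \<noteq> 0" "DB \<noteq> 0" "C1 \<noteq> 0" "C2 \<noteq> 0" "e \<noteq> 0"
    for S1 S2 Am A B B1 DA DB C1 C2 AB BA e :: real
    using that by (simp add: field_simps)
  show ?thesis
    unfolding EQ_qsquare[OF q(1)] EP_qsquare[OF q(1)] psi_qsquare_expand[OF q] tri_prod_mult
      prod_EQ_factor_even[OF q] prod_EP_factor_even[OF q] psi_boundary_products qdiff_1
    by (rule cancel[OF tri_prod_mu_pos_nonzero[OF q] tri_prod_ka_pos_nonzero[OF q] nonzero])
      (use q in simp)
qed

lemma tri_prods_last_ka_zero: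
  assumes n: "n = Suc m" and ka_n: "ka n = 0"
  shows "tri_prod (\<lambda>i j. qdiff q (b i - b j)) n
           = tri_prod (\<lambda>i j. qdiff q (b i - b j)) m * (\<Prod>i=1..m. qdiff q (int (ka i + 2 * n - 2 * i)))"
    and "tri_prod (\<lambda>i j. qdiff q (b i - b j + 1)) n
           = tri_prod (\<lambda>i j. qdiff q (b i - b j + 1)) m * (\<Prod>i=1..m. qdiff q (int (ka i + 2 * n - 2 * i + 1)))"
    and "tri_prod_diag (\<lambda>i j. qdiff q (a i - b j)) n
           = tri_prod_diag (\<lambda>i j. qdiff q (a i - b j)) m * (\<Prod>i\<in>{1..n}. qdiff q (a i - a (Suc n) - 1))"
    and "(\<Prod>i\<in>{1..n}. qdiff q (b i - a (Suc n)))
           = (\<Prod>i=1..m. qdiff q (int (ka i + 2 * n - 2 * i + 1))) * qdiff q 1"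
proof -
  have b_n: "b n = - 2 * int n - 1" and a_Suc_n: "a (Suc n) = - 2 * int n - 2"
    using ka_n vanish[of "Suc n"] by (simp_all add: ka_pos_def mu_pos_def)
  show "tri_prod (\<lambda>i j. qdiff q (b i - b j)) n
      = tri_prod (\<lambda>i j. qdiff q (b i - b j)) m * (\<Prod>i=1..m. qdiff q (int (ka i + 2 * n - 2 * i)))"
    "tri_prod (\<lambda>i j. qdiff q (b i - b j + 1)) n
      = tri_prod (\<lambda>i j. qdiff q (b i - b j + 1)) m * (\<Prod>i=1..m. qdiff q (int (ka i + 2 * n - 2 * i + 1)))"
    unfolding n tri_prod_Suc using b_n n
    by (auto intro!: arg_cong2[where f = "(*)"] prod.cong arg_cong[where f = "qdiff q"] simp: ka_pos_def)
  show "tri_prod_diag (\<lambda>i j. qdiff q (a i - b j)) n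
      = tri_prod_diag (\<lambda>i j. qdiff q (a i - b j)) m * (\<Prod>i\<in>{1..n}. qdiff q (a i - a (Suc n) - 1))"
    unfolding n tri_prod_diag_Suc using b_n a_Suc_n n
    by (auto intro!: arg_cong2[where f = "(*)"] prod.cong arg_cong[where f = "qdiff q"])
  have "(\<Prod>i\<in>{1..n}. qdiff q (b i - a (Suc n)))
      = (\<Prod>i\<in>{1..m}. qdiff q (b i - a (Suc n))) * qdiff q (b n - a (Suc n))"
    unfolding n by (simp add: prod.cl_ivl_Suc)
  then show "(\<Prod>i\<in>{1..n}. qdiff q (b i - a (Suc n)))
      = (\<Prod>i=1..m. qdiff q (int (ka i + 2 * n - 2 * i + 1))) * qdiff q 1"
    using b_n a_Suc_n n
    by (auto intro!: arg_cong2[where f = "(*)"] prod.cong arg_cong[where f = "qdiff q"] simp: ka_pos_def)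
qed

lemma EQ_EP_psi_odd_blocks:
  assumes q: "0 < q" "q < 1" and n: "n = Suc m" and ka_n: "ka n = 0"
  shows "EQ q (q\<^sup>2) 2 n (q * (q\<^sup>2) ^ (n - 1)) mu * EP q (q\<^sup>2) 2 n ((q\<^sup>2) ^ (n - 1)) ka * psi q (q\<^sup>2) mu ka
    = (q\<^sup>2) ^ (\<Sum>i=1..n. (i - 1) * mu i) * (q\<^sup>2) ^ (\<Sum>i=1..n. (i - 1) * ka i)
      * (tri_prod (\<lambda>i j. qdiff q (a i - a j)) n * tri_prod (\<lambda>i j. qdiff q (b i - b j)) m
         * tri_prod_diag (\<lambda>i j. qdiff q (a i - b j)) m * tri_prod (\<lambda>i j. qdiff q (b i - a j)) n)
      / ((\<Prod>i=1..n. qpoch q q (2 * n - 2 * i)) * (\<Prod>i=1..m. qpoch q q (2 * n - 2 * i - 1)))"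
proof -
  have "(\<Prod>i\<in>{1..n}. qdiff q (a i - a (Suc n) - 1)) \<noteq> 0"
    using vanish[of "Suc n"] by (rule_tac prod_atLeastAtMost_nonzero, rule_tac qdiff_nonzero[OF q])
      (simp add: mu_pos_def)
  moreover have "(\<Prod>i=1..m. qdiff q (int (ka i + 2 * n - 2 * i))) \<noteq> 0"
    "(\<Prod>i=1..m. qdiff q (int (ka i + 2 * n - 2 * i + 1))) \<noteq> 0"
    using n by (rule_tac prod_atLeastAtMost_nonzero, rule_tac qdiff_nonzero[OF q], simp)+
  moreover have "(\<Prod>i=1..n. qpoch q q (2 * n - 2 * i)) \<noteq> 0" "(\<Prod>i=1..m. qpoch q q (2 * n - 2 * i - 1)) \<noteq> 0"
    by (rule prod_atLeastAtMost_nonzero, rule qpoch_qq_nonzero[OF q])+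
  ultimately have nonzero: "(\<Prod>i\<in>{1..n}. qdiff q (a i - a (Suc n) - 1)) \<noteq> 0"
    "(\<Prod>i=1..m. qdiff q (int (ka i + 2 * n - 2 * i))) \<noteq> 0"
    "(\<Prod>i=1..m. qdiff q (int (ka i + 2 * n - 2 * i + 1))) \<noteq> 0"
    "(\<Prod>i=1..n. qpoch q q (2 * n - 2 * i)) \<noteq> 0" "(\<Prod>i=1..m. qpoch q q (2 * n - 2 * i - 1)) \<noteq> 0"
    by blast+
  have cancel: "S1 * (Am * A) * (1 / C1) * (S2 * ((B * DB1) * (B1 * DB2)) * (e ^ m / (C2 * (DB1 * DB2))))
      * ((AB * DA) * (BA * (DB2 * e)) / ((B1 * DB2 * e ^ Suc m) * (Am * DA)))
      = S1 * S2 * (A * B * AB * BA) / (C1 * C2)"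
    if "Am \<noteq> 0" "B1 \<noteq> 0" "DA \<noteq> 0" "DB1 \<noteq> 0" "DB2 \<noteq> 0" "C1 \<noteq> 0" "C2 \<noteq> 0" "e \<noteq> 0"
    for S1 S2 Am A B DB1 B1 DB2 C1 C2 AB DA BA e :: real
    using that by (simp add: field_simps)
  show ?thesis
    unfolding EQ_qsquare[OF q(1)] EP_qsquare[OF q(1)] psi_qsquare_expand[OF q] tri_prod_mult
      prod_EQ_factor_odd[OF q] prod_EP_factor_odd[where ka = ka, OF q n ka_n] tri_prods_last_ka_zero[OF n ka_n] qdiff_1
    unfolding n
    by (rule cancel[OF tri_prod_mu_pos_nonzero[OF q] tri_prod_ka_pos_nonzero[OF q] nonzero[unfolded n]])
      (use q in simp)
qed

end

context interlacing
begin

lemma EQ_EP_psi_even: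
  assumes q: "0 < q" "q < 1"
  shows "EQ q (q\<^sup>2) 2 n ((q\<^sup>2) ^ n) mu * EP q (q\<^sup>2) 2 n (inverse q * (q\<^sup>2) ^ n) ka * psi q (q\<^sup>2) mu ka
    = (q\<^sup>2) ^ (\<Sum>i=1..n. (i - 1) * mu i) * (q\<^sup>2) ^ (\<Sum>i=1..n. (i - 1) * ka i)
      * tri_prod (\<lambda>i j. qdiff q (interlace a b i - interlace a b j)) (2 * n)
      / (\<Prod>l=1..2 * n - 1. qpoch q q l)"
  unfolding EQ_EP_psi_even_blocks[OF q] tri_prod_interlace_even[where F = "\<lambda>x y. qdiff q (x - y)"]
    prod_qpoch_qq_even ..

lemma EQ_EP_psi_odd:
  assumes q: "0 < q" "q < 1" and n: "n = Suc m" and ka_n: "ka n = 0"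
  shows "EQ q (q\<^sup>2) 2 n (q * (q\<^sup>2) ^ (n - 1)) mu * EP q (q\<^sup>2) 2 n ((q\<^sup>2) ^ (n - 1)) ka * psi q (q\<^sup>2) mu ka
    = (q\<^sup>2) ^ (\<Sum>i=1..n. (i - 1) * mu i) * (q\<^sup>2) ^ (\<Sum>i=1..n. (i - 1) * ka i)
      * tri_prod (\<lambda>i j. qdiff q (interlace a b i - interlace a b j)) (2 * n - 1)
      / (\<Prod>l=1..2 * n - 1 - 1. qpoch q q l)"
proof -
  have "2 * n - 1 = Suc (2 * m)"
    using n by simp
  then have blocks: "tri_prod (\<lambda>i j. qdiff q (interlace a b i - interlace a b j)) (2 * n - 1) =
      tri_prod (\<lambda>i j. qdiff q (a i - a j)) n * tri_prod (\<lambda>i j. qdiff q (b i - b j)) m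
      * tri_prod_diag (\<lambda>i j. qdiff q (a i - b j)) m * tri_prod (\<lambda>i j. qdiff q (b i - a j)) n"
    using tri_prod_interlace_odd[where F = "\<lambda>x y. qdiff q (x - y)"] n by simp
  have "(\<Prod>l=1..2 * n - 1 - 1. qpoch q q l)
      = (\<Prod>i=1..n. qpoch q q (2 * n - 2 * i)) * (\<Prod>i=1..m. qpoch q q (2 * n - 2 * i - 1))"
    unfolding n by (rule prod_qpoch_qq_odd)
  then show ?thesis
    unfolding EQ_EP_psi_odd_blocks[OF q n ka_n] blocks by simp
qed

end

section \<open>The measure P_N\<close>

lemma sum_alternating_ones: "(\<Sum>j=1..N. (-1::int) ^ (j - 1)) = int (N mod 2)"
proof (induction N)
  case (Suc N)
  then show ?case
    by (cases "even N") (auto simp: mod_Suc even_iff_mod_2_eq_zero odd_iff_mod_2_eq_one)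
qed simp

lemma sum_alternating_distances: "(\<Sum>j=1..N. (-1::int) ^ (j - 1) * int (N - j)) = int (N div 2)"
proof (induction N)
  case (Suc N)
  have "(\<Sum>j=1..Suc N. (-1::int) ^ (j - 1) * int (Suc N - j))
      = (\<Sum>j=1..N. (-1) ^ (j - 1) * int (N - j)) + (\<Sum>j=1..N. (-1) ^ (j - 1))"
    by (simp add: sum.distrib[symmetric] Suc_diff_le algebra_simps)
  also have "\<dots> = int (Suc N div 2)"
    unfolding Suc.IH sum_alternating_ones by (simp add: div_Suc mod_Suc)
  finally show ?case .
qed simp

lemma PN_factorization:
  fixes q z \<alpha> :: real
  assumes nz: "q \<noteq> 0" "z \<noteq> 0" "\<alpha> \<noteq> 0"
  shows "PN q z \<alpha> N h = qpoch (z * \<alpha>) q N * tri_prod (\<lambda>i j. 1 - z\<^sup>2 * q ^ (i + j - 2)) N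
      / (\<Prod>l=1..N - 1. qpoch q q l)
      * z powi (\<Sum>j=1..N. h j - int (N - j))
      * \<alpha> powi (\<Sum>j=1..N. (-1) ^ (j - 1) * (h j - int (N - j)))
      * q powi (\<Sum>j=1..N. int (j - 1) * (h j - int (N - j)))
      * tri_prod (\<lambda>i j. qdiff q (h i - h j)) N"
proof -
  have combine: "x powi (- A) * x powi B = x powi (B - A)" if "x \<noteq> 0" for x :: real and A B
    using that by (simp add: power_int_add[symmetric])
  have z: "z powi (- (\<Sum>j=1..N. int (N - j))) * z powi (\<Sum>j=1..N. h j)
      = z powi (\<Sum>j=1..N. h j - int (N - j))"
    unfolding combine[OF nz(2)] sum_subtractf ..
  have \<alpha>: "\<alpha> powi (- int (N div 2)) * \<alpha> powi (\<Sum>j=1..N. (-1) ^ (j - 1) * h j)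
      = \<alpha> powi (\<Sum>j=1..N. (-1) ^ (j - 1) * (h j - int (N - j)))"
    unfolding combine[OF nz(3)] sum_alternating_distances[symmetric] right_diff_distrib sum_subtractf ..
  have q: "q powi (- (\<Sum>j=1..N. int ((j - 1) * (N - j)))) * q powi (\<Sum>j=1..N. int (j - 1) * h j)
      = q powi (\<Sum>j=1..N. int (j - 1) * (h j - int (N - j)))"
    unfolding combine[OF nz(1)] right_diff_distrib sum_subtractf of_nat_mult ..
  show ?thesis
    unfolding PN_def cN_def tri_prod_def[symmetric] tri_prod_powi_diff[OF nz(1)]
      prod_one_minus_geometric_eq_qpoch
    by (simp only: z[symmetric] \<alpha>[symmetric] q[symmetric] divide_inverse mult_ac)
qed

lemma interlace_shift:
  assumes odd: "\<And>i. 1 \<le> i \<Longrightarrow> 2 * i - 1 \<le> N \<Longrightarrow> h (2 * i - 1) = f i + c"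
    and even: "\<And>i. 1 \<le> i \<Longrightarrow> 2 * i \<le> N \<Longrightarrow> h (2 * i) = g i + c"
    and j: "1 \<le> j" "j \<le> N"
  shows "h j = interlace f g j + c"
proof (cases "even j")
  case True
  then obtain i where i: "j = 2 * i"
    by (rule evenE)
  then have "h j = g i + c"
    using even[of i] j by simp
  then show ?thesis
    by (simp add: i)
next
  case False
  then obtain i where i: "j = 2 * i + 1"
    by (rule oddE)
  then have "2 * Suc i - 1 = j"
    by simp
  then have "h j = f (Suc i) + c"
    using odd[of "Suc i"] j by simp
  then show ?thesis
    by (simp add: i)
qed

lemma tri_prod_qdiff_interlace:
  assumes "\<And>i. 1 \<le> i \<Longrightarrow> 2 * i - 1 \<le> N \<Longrightarrow> h (2 * i - 1) = f i + c"
    and "\<And>i. 1 \<le> i \<Longrightarrow> 2 * i \<le> N \<Longrightarrow> h (2 * i) = g i + c"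
  shows "tri_prod (\<lambda>i j. qdiff q (h i - h j)) N
       = tri_prod (\<lambda>i j. qdiff q (interlace f g i - interlace f g j)) N"
proof (rule tri_prod_cong)
  fix i j
  assume "1 \<le> i" "i < j" "j \<le> N"
  then show "qdiff q (h i - h j) = qdiff q (interlace f g i - interlace f g j)"
    using interlace_shift[OF assms, of i] interlace_shift[OF assms, of j] by simp
qed

lemma sum_interlaced_even:
  fixes n :: nat
  assumes "\<And>i. i \<in> {1..n} \<Longrightarrow> d (2 * i - 1) = int (mu i)"
    and "\<And>i. i \<in> {1..n} \<Longrightarrow> d (2 * i) = int (ka i)"
  shows "(\<Sum>j=1..2 * n. F j (d j)) = (\<Sum>i=1..n. F (2 * i - 1) (int (mu i)) + F (2 * i) (int (ka i)))"
  unfolding sum_interleave using assms by (intro sum.cong) auto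

lemma sum_interlaced_odd:
  assumes n: "n = Suc m"
    and mu: "\<And>i. i \<in> {1..n} \<Longrightarrow> d (2 * i - 1) = int (mu i)"
    and ka: "\<And>i. i \<in> {1..m} \<Longrightarrow> d (2 * i) = int (ka i)" and ka_n: "ka n = 0"
    and F: "F (2 * n) 0 = 0"
  shows "(\<Sum>j=1..2 * n - 1. F j (d j)) = (\<Sum>i=1..n. F (2 * i - 1) (int (mu i)) + F (2 * i) (int (ka i)))"
proof -
  let ?d = "d(2 * n := 0)"
  have "(\<Sum>j=1..2 * n - 1. F j (d j)) = (\<Sum>j=1..2 * n. F j (?d j))"
    using F n by (simp add: sum.cl_ivl_Suc)
  also have "\<dots> = (\<Sum>i=1..n. F (2 * i - 1) (int (mu i)) + F (2 * i) (int (ka i)))"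
    using mu ka ka_n n by (intro sum_interlaced_even) (auto simp: le_Suc_eq)
  finally show ?thesis .
qed

lemma interlaced_exponents:
  "(\<Sum>i=1..n. (-1) ^ (2 * i - 1 - 1) * int (mu i) + (-1) ^ (2 * i - 1) * int (ka i))
     = (\<Sum>i=1..n. int (mu i) - int (ka i))"
proof (rule sum.cong[OF refl])
  fix i
  assume "i \<in> {1..n}"
  then have "2 * i - 1 - 1 = 2 * (i - 1)" "2 * i - 1 = Suc (2 * (i - 1))"
    by auto
  then show "(-1) ^ (2 * i - 1 - 1) * int (mu i) + (-1) ^ (2 * i - 1) * int (ka i) = int (mu i) - int (ka i)"
    by simp
qed

lemma psize_eq_sum:
  assumes "\<And>i. n < i \<Longrightarrow> f i = 0"
  shows "psize f = (\<Sum>i=1..n. f i)"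
  unfolding psize_def
proof (rule sum.mono_neutral_left)
  show "{i. 1 \<le> i \<and> f i \<noteq> 0} \<subseteq> {1..n}"
  proof
    fix i
    assume "i \<in> {i. 1 \<le> i \<and> f i \<noteq> 0}"
    then show "i \<in> {1..n}"
      using assms[of i] by (cases "n < i") auto
  qed
qed auto

lemma monomial_exponents:
  fixes q z :: real
  shows "z ^ (\<Sum>i=1..n. mu i) * (q * z) ^ (\<Sum>i=1..n. ka i)
      * ((q\<^sup>2) ^ (\<Sum>i=1..n. (i - 1) * mu i) * (q\<^sup>2) ^ (\<Sum>i=1..n. (i - 1) * ka i))
    = z powi (\<Sum>i=1..n. int (mu i) + int (ka i))
      * q powi (\<Sum>i=1..n. int (2 * i - 1 - 1) * int (mu i) + int (2 * i - 1) * int (ka i))"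
proof -
  have coeff: "(2 * i - 1 - 1) * mu i + (2 * i - 1) * ka i = 2 * ((i - 1) * mu i) + 2 * ((i - 1) * ka i) + ka i"
    if "i \<in> {1..n}" for i
  proof -
    have "2 * i - 1 - 1 = 2 * (i - 1)" "2 * i - 1 = 2 * (i - 1) + 1"
      using that by auto
    then show ?thesis
      by (simp only: add_mult_distrib mult.assoc mult_1)
  qed
  have "(\<Sum>i=1..n. (2 * i - 1 - 1) * mu i + (2 * i - 1) * ka i)
      = (\<Sum>i=1..n. 2 * ((i - 1) * mu i) + 2 * ((i - 1) * ka i) + ka i)"
    using coeff by (rule sum.cong[OF refl])
  also have "\<dots> = 2 * (\<Sum>i=1..n. (i - 1) * mu i) + 2 * (\<Sum>i=1..n. (i - 1) * ka i) + (\<Sum>i=1..n. ka i)"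
    by (simp only: sum.distrib sum_distrib_left)
  finally have q_exp: "(\<Sum>i=1..n. int (2 * i - 1 - 1) * int (mu i) + int (2 * i - 1) * int (ka i))
      = int (2 * (\<Sum>i=1..n. (i - 1) * mu i) + 2 * (\<Sum>i=1..n. (i - 1) * ka i) + (\<Sum>i=1..n. ka i))"
    by (simp only: of_nat_mult[symmetric] of_nat_add[symmetric] of_nat_sum[symmetric])
  have z_exp: "(\<Sum>i=1..n. int (mu i) + int (ka i)) = int ((\<Sum>i=1..n. mu i) + (\<Sum>i=1..n. ka i))"
    by (simp add: sum.distrib)
  show ?thesis
    unfolding q_exp z_exp power_int_of_nat by (simp add: power_add power_mult power_mult_distrib)
qed

lemma interlacing_even_intro:
  assumes "\<forall>i>n. mu i = 0 \<and> ka i = 0"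
    and "\<forall>j\<in>{1..n}. ka j \<le> mu j \<and> (j < n \<longrightarrow> mu (Suc j) \<le> ka j)"
  shows "interlacing n mu ka"
proof
  fix j
  assume "1 \<le> j" "j \<le> n"
  then show "ka j \<le> mu j \<and> mu (Suc j) \<le> ka j"
    using assms by (cases "j < n") auto
qed (use assms in auto)

lemma interlacing_odd_intro:
  assumes "\<forall>i>n. mu i = 0" "\<forall>i\<ge>n. ka i = 0"
    and "\<forall>j\<in>{1..n - 1}. ka j \<le> mu j \<and> mu (Suc j) \<le> ka j"
  shows "interlacing n mu ka"
proof
  fix j
  assume "1 \<le> j" "j \<le> n"
  then show "ka j \<le> mu j \<and> mu (Suc j) \<le> ka j"
    using assms by (cases "j < n") auto
qed (use assms in auto)

lemma Pr_e_qsquare: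
  fixes q z \<alpha> :: real
  assumes q: "0 < q" "q < 1" and n: "n \<ge> 1" and il: "interlacing n mu ka"
    and nz: "qpinf (z * \<alpha>) q \<noteq> 0" "qpinf (z * (q * z)) q \<noteq> 0"
  shows "Pr_e q (q\<^sup>2) 2 n z (q * z) (inverse q * (q\<^sup>2) ^ n) \<alpha> mu ka
    = qpoch (z * \<alpha>) q (2 * n) * tri_prod (\<lambda>i j. 1 - z\<^sup>2 * q ^ (i + j - 2)) (2 * n)
      / (\<Prod>l=1..2 * n - 1. qpoch q q l)
      * z powi (\<Sum>i=1..n. int (mu i) + int (ka i))
      * \<alpha> powi (\<Sum>i=1..n. int (mu i) - int (ka i))
      * q powi (\<Sum>i=1..n. int (2 * i - 1 - 1) * int (mu i) + int (2 * i - 1) * int (ka i))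
      * tri_prod (\<lambda>i j. qdiff q (interlace (mu_pos mu) (ka_pos ka) i
                                    - interlace (mu_pos mu) (ka_pos ka) j)) (2 * n)"
proof -
  interpret interlacing n mu ka
    by (rule il)
  have shift: "(q\<^sup>2) ^ n * z * \<alpha> = z * \<alpha> * q ^ (2 * n)"
    by (simp only: power_mult[symmetric] mult_ac)
  have head: "qpinf (z * \<alpha>) q / qpinf ((q\<^sup>2) ^ n * z * \<alpha>) q = qpoch (z * \<alpha>) q (2 * n)"
    unfolding shift by (rule qpinf_divide_shift) (use q nz in simp_all)
  have sizes: "psize mu = (\<Sum>i=1..n. mu i)" "psize ka = (\<Sum>i=1..n. ka i)"
    by (intro psize_eq_sum; simp add: vanish)+
  have rearrange: "X * P * (S1 * S2 * V / C) * z ^ SM * (q * z) ^ SK * A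
      = X * P / C * (z ^ SM * (q * z) ^ SK * (S1 * S2)) * A * V" for X P S1 S2 V C SM SK A
    by (simp add: divide_inverse mult_ac)
  have "Pr_e q (q\<^sup>2) 2 n z (q * z) (inverse q * (q\<^sup>2) ^ n) \<alpha> mu ka
      = qpinf (z * \<alpha>) q / qpinf ((q\<^sup>2) ^ n * z * \<alpha>) q
        * (\<Prod>p. qpinf (z * (q * z) * (q\<^sup>2) ^ p) q
              * qpinf (inverse q * (q\<^sup>2) ^ n * z * (q * z) * (q\<^sup>2) ^ (p + n)) q
            / (qpinf (z * (q * z) * (q\<^sup>2) ^ (p + n)) q
              * qpinf (inverse q * (q\<^sup>2) ^ n * z * (q * z) * (q\<^sup>2) ^ p) q))
        * (EQ q (q\<^sup>2) 2 n ((q\<^sup>2) ^ n) mu * EP q (q\<^sup>2) 2 n (inverse q * (q\<^sup>2) ^ n) ka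
           * psi q (q\<^sup>2) mu ka)
        * z ^ psize mu * (q * z) ^ psize ka * \<alpha> powi (int (psize mu) - int (psize ka))"
    unfolding Pr_e_def by (simp only: mult.assoc)
  then show ?thesis
    unfolding head prodinf_even[OF q n nz(2)] EQ_EP_psi_even[OF q] sizes rearrange
      monomial_exponents
    by (simp add: sum_subtractf mult_ac)
qed

lemma Pr_o_qsquare:
  fixes q z \<alpha> :: real
  assumes q: "0 < q" "q < 1" and n: "n = Suc m" and il: "interlacing n mu ka" and ka_n: "ka n = 0"
    and nz: "qpinf (z * \<alpha>) q \<noteq> 0" "qpinf (z * (q * z)) q \<noteq> 0"
  shows "Pr_o q (q\<^sup>2) 2 n z (q * z) (q * (q\<^sup>2) ^ (n - 1)) \<alpha> mu ka
    = qpoch (z * \<alpha>) q (2 * n - 1) * tri_prod (\<lambda>i j. 1 - z\<^sup>2 * q ^ (i + j - 2)) (2 * n - 1)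
      / (\<Prod>l=1..2 * n - 1 - 1. qpoch q q l)
      * z powi (\<Sum>i=1..n. int (mu i) + int (ka i))
      * \<alpha> powi (\<Sum>i=1..n. int (mu i) - int (ka i))
      * q powi (\<Sum>i=1..n. int (2 * i - 1 - 1) * int (mu i) + int (2 * i - 1) * int (ka i))
      * tri_prod (\<lambda>i j. qdiff q (interlace (mu_pos mu) (ka_pos ka) i
                                    - interlace (mu_pos mu) (ka_pos ka) j)) (2 * n - 1)"
proof -
  interpret interlacing n mu ka
    by (rule il)
  have n_pos: "n \<ge> 1"
    using n by simp
  have "q * (q\<^sup>2) ^ (n - 1) = q ^ (2 * n - 1)"
    unfolding n by (simp add: power_mult[symmetric])
  then have shift: "q * (q\<^sup>2) ^ (n - 1) * z * \<alpha> = z * \<alpha> * q ^ (2 * n - 1)"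
    by (simp add: mult_ac)
  have head: "qpinf (z * \<alpha>) q / qpinf (q * (q\<^sup>2) ^ (n - 1) * z * \<alpha>) q = qpoch (z * \<alpha>) q (2 * n - 1)"
    unfolding shift by (rule qpinf_divide_shift) (use q nz in simp_all)
  have sizes: "psize mu = (\<Sum>i=1..n. mu i)" "psize ka = (\<Sum>i=1..n. ka i)"
    by (intro psize_eq_sum; simp add: vanish)+
  have rearrange: "X * P * (S1 * S2 * V / C) * z ^ SM * (q * z) ^ SK * A
      = X * P / C * (z ^ SM * (q * z) ^ SK * (S1 * S2)) * A * V" for X P S1 S2 V C SM SK A
    by (simp add: divide_inverse mult_ac)
  have "Pr_o q (q\<^sup>2) 2 n z (q * z) (q * (q\<^sup>2) ^ (n - 1)) \<alpha> mu ka
      = qpinf (z * \<alpha>) q / qpinf (q * (q\<^sup>2) ^ (n - 1) * z * \<alpha>) q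
        * (\<Prod>p. qpinf (z * (q * z) * (q\<^sup>2) ^ p) q
              * qpinf (q * (q\<^sup>2) ^ (n - 1) * z * (q * z) * (q\<^sup>2) ^ (p + n - 1)) q
            / (qpinf (q * (q\<^sup>2) ^ (n - 1) * z * (q * z) * (q\<^sup>2) ^ p) q
              * qpinf (z * (q * z) * (q\<^sup>2) ^ (p + n - 1)) q))
        * (EQ q (q\<^sup>2) 2 n (q * (q\<^sup>2) ^ (n - 1)) mu * EP q (q\<^sup>2) 2 n ((q\<^sup>2) ^ (n - 1)) ka
           * psi q (q\<^sup>2) mu ka)
        * z ^ psize mu * (q * z) ^ psize ka * \<alpha> powi (int (psize mu) - int (psize ka))"
    unfolding Pr_o_def by (simp only: mult.assoc)
  then show ?thesis
    unfolding head prodinf_odd[OF q n_pos nz(2)] EQ_EP_psi_odd[OF q n ka_n] sizes rearrange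
      monomial_exponents
    by (simp add: sum_subtractf mult_ac)
qed

lemma Pr_e_eq_PN:
  fixes q z \<alpha> :: real and h :: "nat \<Rightarrow> int"
  assumes q: "0 < q" "q < 1" and n: "n \<ge> 1" and nonzero: "z \<noteq> 0" "\<alpha> \<noteq> 0"
    and nz: "qpinf (z * \<alpha>) q \<noteq> 0" "qpinf (z * (q * z)) q \<noteq> 0"
    and vanish: "\<forall>i>n. mu i = 0 \<and> ka i = 0"
    and interlace: "\<forall>j\<in>{1..n}. ka j \<le> mu j \<and> (j < n \<longrightarrow> mu (Suc j) \<le> ka j)"
    and h_mu: "\<forall>j\<in>{1..n}. h (2 * j - 1) = int (mu j) + 2 * int n - (2 * int j - 1)"
    and h_ka: "\<forall>j\<in>{1..n}. h (2 * j) = int (ka j) + 2 * int n - 2 * int j"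
  shows "Pr_e q (q\<^sup>2) 2 n z (q * z) (inverse q * (q\<^sup>2) ^ n) \<alpha> mu ka = PN q z \<alpha> (2 * n) h"
proof -
  have il: "interlacing n mu ka"
    using vanish interlace by (rule interlacing_even_intro)
  have d_mu: "h (2 * i - 1) - int (2 * n - (2 * i - 1)) = int (mu i)" if "i \<in> {1..n}" for i
    using h_mu that by auto
  have d_ka: "h (2 * i) - int (2 * n - 2 * i) = int (ka i)" if "i \<in> {1..n}" for i
    using h_ka that by auto
  have V: "tri_prod (\<lambda>i j. qdiff q (h i - h j)) (2 * n)
      = tri_prod (\<lambda>i j. qdiff q (interlace (mu_pos mu) (ka_pos ka) i - interlace (mu_pos mu) (ka_pos ka) j)) (2 * n)"
    by (rule tri_prod_qdiff_interlace[where c = "2 * int n + 1"]) (use h_mu h_ka in \<open>auto simp: mu_pos_def ka_pos_def\<close>)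
  have "q \<noteq> 0"
    using q by simp
  have sum_mu_ka: "(\<Sum>j=1..2 * n. F j (h j - int (2 * n - j)))
      = (\<Sum>i=1..n. F (2 * i - 1) (int (mu i)) + F (2 * i) (int (ka i)))" for F :: "nat \<Rightarrow> int \<Rightarrow> int"
    by (rule sum_interlaced_even) (use d_mu d_ka in auto)
  have exponent_sums:
    "(\<Sum>j=1..2 * n. h j - int (2 * n - j)) = (\<Sum>i=1..n. int (mu i) + int (ka i))"
    "(\<Sum>j=1..2 * n. (-1) ^ (j - 1) * (h j - int (2 * n - j))) = (\<Sum>i=1..n. int (mu i) - int (ka i))"
    "(\<Sum>j=1..2 * n. int (j - 1) * (h j - int (2 * n - j)))
       = (\<Sum>i=1..n. int (2 * i - 1 - 1) * int (mu i) + int (2 * i - 1) * int (ka i))"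
    using sum_mu_ka[of "\<lambda>j x. x"] sum_mu_ka[of "\<lambda>j x. (-1) ^ (j - 1) * x"]
      sum_mu_ka[of "\<lambda>j x. int (j - 1) * x"]
    by (simp_all only: interlaced_exponents)
  show ?thesis
    unfolding Pr_e_qsquare[OF q n il nz] PN_factorization[OF \<open>q \<noteq> 0\<close> nonzero] V exponent_sums ..
qed

lemma Pr_o_eq_PN:
  fixes q z \<alpha> :: real and h :: "nat \<Rightarrow> int"
  assumes q: "0 < q" "q < 1" and n: "n \<ge> 1" and nonzero: "z \<noteq> 0" "\<alpha> \<noteq> 0"
    and nz: "qpinf (z * \<alpha>) q \<noteq> 0" "qpinf (z * (q * z)) q \<noteq> 0"
    and vanish_mu: "\<forall>i>n. mu i = 0" and vanish_ka: "\<forall>i\<ge>n. ka i = 0"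
    and interlace: "\<forall>j\<in>{1..n - 1}. ka j \<le> mu j \<and> mu (Suc j) \<le> ka j"
    and h_mu: "\<forall>j\<in>{1..n}. h (2 * j - 1) = int (mu j) + (2 * int n - 1) - (2 * int j - 1)"
    and h_ka: "\<forall>j\<in>{1..n - 1}. h (2 * j) = int (ka j) + (2 * int n - 1) - 2 * int j"
  shows "Pr_o q (q\<^sup>2) 2 n z (q * z) (q * (q\<^sup>2) ^ (n - 1)) \<alpha> mu ka = PN q z \<alpha> (2 * n - 1) h"
proof -
  obtain m where m: "n = Suc m"
    using n by (cases n) auto
  have ka_n: "ka n = 0"
    using vanish_ka by simp
  have il: "interlacing n mu ka"
    using vanish_mu vanish_ka interlace by (rule interlacing_odd_intro)
  have d_mu: "h (2 * i - 1) - int (2 * n - 1 - (2 * i - 1)) = int (mu i)" if "i \<in> {1..n}" for i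
    using h_mu that by auto
  have d_ka: "h (2 * i) - int (2 * n - 1 - 2 * i) = int (ka i)" if "i \<in> {1..m}" for i
    using h_ka that m by auto
  have V: "tri_prod (\<lambda>i j. qdiff q (h i - h j)) (2 * n - 1)
      = tri_prod (\<lambda>i j. qdiff q (interlace (mu_pos mu) (ka_pos ka) i - interlace (mu_pos mu) (ka_pos ka) j)) (2 * n - 1)"
    by (rule tri_prod_qdiff_interlace[where c = "2 * int n"]) (use h_mu h_ka in \<open>auto simp: mu_pos_def ka_pos_def\<close>)
  have sum_mu_ka: "(\<Sum>j=1..2 * n - 1. F j (h j - int (2 * n - 1 - j)))
      = (\<Sum>i=1..n. F (2 * i - 1) (int (mu i)) + F (2 * i) (int (ka i)))"
    if "F (2 * n) 0 = 0" for F :: "nat \<Rightarrow> int \<Rightarrow> int"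
    by (rule sum_interlaced_odd[OF m]) (use d_mu d_ka ka_n that in auto)
  have "q \<noteq> 0"
    using q by simp
  have exponent_sums:
    "(\<Sum>j=1..2 * n - 1. h j - int (2 * n - 1 - j)) = (\<Sum>i=1..n. int (mu i) + int (ka i))"
    "(\<Sum>j=1..2 * n - 1. (-1) ^ (j - 1) * (h j - int (2 * n - 1 - j)))
       = (\<Sum>i=1..n. int (mu i) - int (ka i))"
    "(\<Sum>j=1..2 * n - 1. int (j - 1) * (h j - int (2 * n - 1 - j)))
       = (\<Sum>i=1..n. int (2 * i - 1 - 1) * int (mu i) + int (2 * i - 1) * int (ka i))"
    using sum_mu_ka[of "\<lambda>j x. x"] sum_mu_ka[of "\<lambda>j x. (-1) ^ (j - 1) * x"]
      sum_mu_ka[of "\<lambda>j x. int (j - 1) * x"]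
    by (simp_all only: interlaced_exponents mult_zero_right)
  show ?thesis
    unfolding Pr_o_qsquare[OF q m il ka_n nz] PN_factorization[OF \<open>q \<noteq> 0\<close> nonzero] V exponent_sums ..
qed

theorem proposition7:
  fixes q t z \<alpha> w u z1 z2 :: real and n :: nat
  assumes q0: "0 < q" and q1: "q < 1" and t: "t = q ^ 2" and n: "n \<ge> 1"
    and z: "z > 0" and a: "\<alpha> > 0"
    and w: "w = inverse q * t ^ n" and u: "u = q * t ^ (n - 1)"
    and z1: "z1 = z" and z2: "z2 = q * z"
    and nz1: "qpinf (z1 * \<alpha>) q \<noteq> 0" "qpinf (t ^ n * z1 * \<alpha>) q \<noteq> 0"
             "qpinf (u * z1 * \<alpha>) q \<noteq> 0"
    and nz2: "\<forall>p. qpinf (z1 * z2 * t ^ p) q \<noteq> 0 \<and> qpinf (w * z1 * z2 * t ^ p) q \<noteq> 0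
                  \<and> qpinf (u * z1 * z2 * t ^ p) q \<noteq> 0"
    and cv_e: "convergent_prod (\<lambda>p. qpinf (z1 * z2 * t ^ p) q * qpinf (w * z1 * z2 * t ^ (p + n)) q
             / (qpinf (z1 * z2 * t ^ (p + n)) q * qpinf (w * z1 * z2 * t ^ p) q))"
    and cv_o: "convergent_prod (\<lambda>p. qpinf (z1 * z2 * t ^ p) q * qpinf (u * z1 * z2 * t ^ (p + n - 1)) q
             / (qpinf (u * z1 * z2 * t ^ p) q * qpinf (z1 * z2 * t ^ (p + n - 1)) q))"
  shows
    "(\<forall>(mu :: nat \<Rightarrow> nat) (ka :: nat \<Rightarrow> nat) (h :: nat \<Rightarrow> int).
        (\<forall>i>n. mu i = 0 \<and> ka i = 0)
        \<and> (\<forall>j\<in>{1..n}. ka j \<le> mu j \<and> (j < n \<longrightarrow> mu (Suc j) \<le> ka j))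
        \<and> (\<forall>j\<in>{1..n}. h (2 * j - 1) = int (mu j) + 2 * int n - (2 * int j - 1))
        \<and> (\<forall>j\<in>{1..n}. h (2 * j) = int (ka j) + 2 * int n - 2 * int j)
      \<longrightarrow> Pr_e q t 2 n z1 z2 w \<alpha> mu ka = PN q z \<alpha> (2 * n) h)
   \<and> (\<forall>(mu :: nat \<Rightarrow> nat) (ka :: nat \<Rightarrow> nat) (h :: nat \<Rightarrow> int).
        (\<forall>i>n. mu i = 0) \<and> (\<forall>i\<ge>n. ka i = 0)
        \<and> (\<forall>j\<in>{1..n-1}. ka j \<le> mu j \<and> mu (Suc j) \<le> ka j)
        \<and> (\<forall>j\<in>{1..n}. h (2 * j - 1) = int (mu j) + (2 * int n - 1) - (2 * int j - 1))
        \<and> (\<forall>j\<in>{1..n-1}. h (2 * j) = int (ka j) + (2 * int n - 1) - 2 * int j)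
      \<longrightarrow> Pr_o q t 2 n z1 z2 u \<alpha> mu ka = PN q z \<alpha> (2 * n - 1) h)"
proof -
  have nz: "qpinf (z * \<alpha>) q \<noteq> 0" "qpinf (z * (q * z)) q \<noteq> 0"
    using nz1(1) nz2 unfolding z1 z2 by (auto dest: spec[of _ 0])
  show ?thesis
    unfolding t w u z1 z2
    using Pr_e_eq_PN[OF q0 q1 n _ _ nz] Pr_o_eq_PN[OF q0 q1 n _ _ nz] z a by auto
qed

end
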